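(* Let $\mathcal{W}$ be a finite set, let $(X_t)_{t\ge 1}$ be a time-homogeneous first-order Markov chain on $\mathcal{W}$ with initial distribution $p_{x_1}$ and transition probabilities $q_x(x_{t+1}\mid x_t)$, and let $d:\mathcal{W}\times\mathcal{W}\to\mathbb{R}$ be a distortion measure and $\bar D$ a threshold. Consider the optimization problem $$\min_{\{q_t(y_t\mid x^t,y^{t-1})\}_{t\ge 1}} \ \lim_{n\to\infty}\frac1n\sum_{t=1}^n I^{\boldsymbol q}(X^t;Y_t\mid Y^{t-1})\quad\text{subject to}\quad \lim_{n\to\infty}\mathbb{E}\Big[\frac1n\sum_{t=1}^n d(X_t,Y_t)\Big]\le \bar D,$$ where the minimization is over the set $\mathcal{Q}_H$ of history-dependent release policies. Then there is no loss of optimality in restricting this minimization to the set $\mathcal{Q}_S\subseteq\mathcal{Q}_H$ of simplified policies, i.e. policies $\boldsymbol q_s=\{q^s_t(y_t\mid x_t,x_{t-1},y^{t-1})\}_{t\ge1}$. Furthermore, for any $\boldsymbol q_s\in\mathcal{Q}_S$ and any $n$, the induced information leakage satisfies $$I^{\boldsymbol q_s}(X^n;Y^n)=\sum_{t=1}^n I^{\boldsymbol q_s}(X_t,X_{t-1};Y_t\mid Y^{t-1})=\sum_{t=1}^n\ \sum_{y^t\in\mathcal{W}^t,\ x_t,x_{t-1}\in\mathcal{W}} P^{\boldsymbol q_s}(x_t,x_{t-1},y^t)\log\frac{q^s_t(y_t\mid x_t,x_{t-1},y^{t-1})}{P^{\boldsymbol q_s}(y_t\mid y^{t-1})}.$$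
   Context: Notation: $X^t=(X_1,\dots,X_t)$, $Y^{t-1}=(Y_1,\dots,Y_{t-1})$, with $Y^0$ empty; at $t=1$ terms involving $X_0$ are absent (e.g. $q_1(y_1\mid x_1)$). A history-dependent location release policy is a sequence $\boldsymbol q=\{q_t(y_t\mid x^t,y^{t-1})\}_{t\ge1}$ of conditional probability distributions on $\mathcal{W}$ (so $\sum_{y_t\in\mathcal W}q_t(y_t\mid x^t,y^{t-1})=1$); $\mathcal{Q}_H$ denotes the set of all such policies. The released locations $Y_t\in\mathcal{W}$ are generated so that the joint law is $$P^{\boldsymbol q}(X^n=x^n,Y^n=y^n)=p_{x_1}(x_1)q_1(y_1\mid x_1)\prod_{t=2}^n q_x(x_t\mid x_{t-1})\,q_t(y_t\mid x^t,y^{t-1}).$$ $I^{\boldsymbol q}$, $P^{\boldsymbol q}$ and the expectation denote mutual information, probabilities and expectation under this joint law. $\mathcal{Q}_S$ is the set of policies in $\mathcal{Q}_H$ of the form $q^s_t(y_t\mid x_t,x_{t-1},y^{t-1})$, i.e. depending on the true trajectory only through the current and previous true locations (and on the whole released history). *)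

theory Defs
  imports "HOL-Analysis.Analysis"
begin

text \<open>Trajectories x^n, y^n are lists of length n over W; X_t = xs ! (t-1).\<close>

definition lists_n :: "'a set \<Rightarrow> nat \<Rightarrow> 'a list set" where
  "lists_n W n = {xs. set xs \<subseteq> W \<and> length xs = n}"

text \<open>Markov chain: initial pmf p1, transition kernel Q x x' = q_x(x' | x).\<close>
definition markov_chain :: "'a set \<Rightarrow> ('a \<Rightarrow> real) \<Rightarrow> ('a \<Rightarrow> 'a \<Rightarrow> real) \<Rightarrow> bool" where
  "markov_chain W p1 Q \<longleftrightarrow>
     (\<forall>x\<in>W. p1 x \<ge> 0) \<and> (\<Sum>x\<in>W. p1 x) = 1 \<and>
     (\<forall>x\<in>W. (\<forall>x'\<in>W. Q x x' \<ge> 0) \<and> (\<Sum>x'\<in>W. Q x x') = 1)"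

text \<open>A history-dependent policy: q t xs ys y = q_t(y | x^t = xs, y^{t-1} = ys).\<close>
definition QH :: "'a set \<Rightarrow> (nat \<Rightarrow> 'a list \<Rightarrow> 'a list \<Rightarrow> 'a \<Rightarrow> real) set" where
  "QH W = {q. \<forall>t\<ge>1. \<forall>xs\<in>lists_n W t. \<forall>ys\<in>lists_n W (t - 1).
              (\<forall>y\<in>W. q t xs ys y \<ge> 0) \<and> (\<Sum>y\<in>W. q t xs ys y) = 1}"

definition prev :: "'a list \<Rightarrow> 'a option" where
  "prev xs = (if length xs \<ge> 2 then Some (xs ! (length xs - 2)) else None)"

definition QS :: "'a set \<Rightarrow> (nat \<Rightarrow> 'a list \<Rightarrow> 'a list \<Rightarrow> 'a \<Rightarrow> real) set" where
  "QS W = {q \<in> QH W. \<exists>qs :: nat \<Rightarrow> 'a \<Rightarrow> 'a option \<Rightarrow> 'a list \<Rightarrow> 'a \<Rightarrow> real.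
             \<forall>t\<ge>1. \<forall>xs\<in>lists_n W t. \<forall>ys\<in>lists_n W (t - 1). \<forall>y\<in>W.
               q t xs ys y = qs t (last xs) (prev xs) ys y}"

text \<open>Joint law P^q(X^n = xs, Y^n = ys).\<close>
definition joint :: "('a \<Rightarrow> real) \<Rightarrow> ('a \<Rightarrow> 'a \<Rightarrow> real) \<Rightarrow> (nat \<Rightarrow> 'a list \<Rightarrow> 'a list \<Rightarrow> 'a \<Rightarrow> real)
                      \<Rightarrow> nat \<Rightarrow> 'a list \<times> 'a list \<Rightarrow> real" where
  "joint p1 Q q n = (\<lambda>(xs, ys). if n = 0 then 1 else
      p1 (xs ! 0) * q 1 [xs ! 0] [] (ys ! 0) *
      (\<Prod>t\<in>{2..n}. Q (xs ! (t - 2)) (xs ! (t - 1)) * q t (take t xs) (take (t - 1) ys) (ys ! (t - 1))))"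

definition Omega :: "'a set \<Rightarrow> nat \<Rightarrow> ('a list \<times> 'a list) set" where
  "Omega W n = lists_n W n \<times> lists_n W n"

definition Pr :: "'w set \<Rightarrow> ('w \<Rightarrow> real) \<Rightarrow> ('w \<Rightarrow> bool) \<Rightarrow> real" where
  "Pr S pm E = (\<Sum>\<omega>\<in>{\<omega>\<in>S. E \<omega>}. pm \<omega>)"

definition cmi :: "'w set \<Rightarrow> ('w \<Rightarrow> real) \<Rightarrow> ('w \<Rightarrow> 'b) \<Rightarrow> ('w \<Rightarrow> 'c) \<Rightarrow> ('w \<Rightarrow> 'd) \<Rightarrow> real" where
  "cmi S pm A B C =
     (\<Sum>(a, b, c)\<in>A ` S \<times> B ` S \<times> C ` S.
        let pabc = Pr S pm (\<lambda>\<omega>. A \<omega> = a \<and> B \<omega> = b \<and> C \<omega> = c);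
            pc = Pr S pm (\<lambda>\<omega>. C \<omega> = c);
            pac = Pr S pm (\<lambda>\<omega>. A \<omega> = a \<and> C \<omega> = c);
            pbc = Pr S pm (\<lambda>\<omega>. B \<omega> = b \<and> C \<omega> = c)
        in if pabc > 0 then pabc * ln (pabc * pc / (pac * pbc)) else 0)"

definition mi :: "'w set \<Rightarrow> ('w \<Rightarrow> real) \<Rightarrow> ('w \<Rightarrow> 'b) \<Rightarrow> ('w \<Rightarrow> 'c) \<Rightarrow> real" where
  "mi S pm A B = cmi S pm A B (\<lambda>_. ())"

text \<open>(1/n) sum_{t=1}^n I^q(X^t; Y_t | Y^{t-1}), computed under the horizon-n law.\<close>
definition leak_avg :: "'a set \<Rightarrow> ('a \<Rightarrow> real) \<Rightarrow> ('a \<Rightarrow> 'a \<Rightarrow> real)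
      \<Rightarrow> (nat \<Rightarrow> 'a list \<Rightarrow> 'a list \<Rightarrow> 'a \<Rightarrow> real) \<Rightarrow> nat \<Rightarrow> real" where
  "leak_avg W p1 Q q n = (1 / real n) *
     (\<Sum>t = 1..n. cmi (Omega W n) (joint p1 Q q n)
        (\<lambda>(xs, ys). take t xs) (\<lambda>(xs, ys). ys ! (t - 1)) (\<lambda>(xs, ys). take (t - 1) ys))"

definition dist_avg :: "'a set \<Rightarrow> ('a \<Rightarrow> real) \<Rightarrow> ('a \<Rightarrow> 'a \<Rightarrow> real)
      \<Rightarrow> (nat \<Rightarrow> 'a list \<Rightarrow> 'a list \<Rightarrow> 'a \<Rightarrow> real) \<Rightarrow> ('a \<Rightarrow> 'a \<Rightarrow> real) \<Rightarrow> nat \<Rightarrow> real" where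
  "dist_avg W p1 Q q d n =
     (\<Sum>(xs, ys)\<in>Omega W n. joint p1 Q q n (xs, ys) *
        ((1 / real n) * (\<Sum>t = 1..n. d (xs ! (t - 1)) (ys ! (t - 1)))))"

text \<open>Objective and feasibility (limits read as limsup).\<close>
definition objective :: "'a set \<Rightarrow> ('a \<Rightarrow> real) \<Rightarrow> ('a \<Rightarrow> 'a \<Rightarrow> real)
      \<Rightarrow> (nat \<Rightarrow> 'a list \<Rightarrow> 'a list \<Rightarrow> 'a \<Rightarrow> real) \<Rightarrow> ereal" where
  "objective W p1 Q q = limsup (\<lambda>n. ereal (leak_avg W p1 Q q n))"

definition feasible :: "'a set \<Rightarrow> ('a \<Rightarrow> real) \<Rightarrow> ('a \<Rightarrow> 'a \<Rightarrow> real)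
      \<Rightarrow> ('a \<Rightarrow> 'a \<Rightarrow> real) \<Rightarrow> real \<Rightarrow> (nat \<Rightarrow> 'a list \<Rightarrow> 'a list \<Rightarrow> 'a \<Rightarrow> real) \<Rightarrow> bool" where
  "feasible W p1 Q d Dbar q \<longleftrightarrow> limsup (\<lambda>n. ereal (dist_avg W p1 Q q d n)) \<le> ereal Dbar"

end

(*
  Given any history-dependent policy q, let the state policy release Y_t from the conditional
  law of Y_t given the state (X_t, X_{t-1}) and the past releases Y^{t-1} under q.  Because the
  locations form a Markov chain, the law of (X_{t+1}, X_t, Y^t) is determined by that of
  (X_t, X_{t-1}, Y^t); by induction on t the state policy therefore induces the same law of
  (X_t, X_{t-1}, Y^t) as q for every t, hence the same expected distortion.  Under a simplified
  policy Y_t depends on X^t only through the state, so its leakage term I(X^t; Y_t | Y^{t-1})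
  equals I(X_t, X_{t-1}; Y_t | Y^{t-1}); this quantity is the same under q, where it is at most
  I(X^t; Y_t | Y^{t-1}) by data processing.

  For a simplified policy the probability of (x^t, y^t) is that of (x^{t-1}, y^{t-1}) times a
  transition probability of the chain and the kernel q^s_t, while the probability of x^t gains
  the same transition probability.  Hence the information density of (X^n; Y^n) telescopes into
  the sum over t of the conditional information densities of (X_t, X_{t-1}) and Y_t given
  Y^{t-1}, and taking expectations gives the chain rule and the explicit formula.
*)

theory Submission
  imports Defs
begin

section \<open>Finite probability spaces and conditional mutual information\<close>

lemma Pr_cong: "(\<And>w. w \<in> S \<Longrightarrow> E w = E' w) \<Longrightarrow> Pr S pm E = Pr S pm E'"
  unfolding Pr_def by (rule sum.cong) auto

lemma Pr_eq_sum_if: "finite S \<Longrightarrow> Pr S pm E = (\<Sum>w\<in>S. if E w then pm w else 0)"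
  unfolding Pr_def by (simp add: sum.inter_filter)

lemma Pr_nonneg: "(\<And>w. w \<in> S \<Longrightarrow> pm w \<ge> 0) \<Longrightarrow> Pr S pm E \<ge> 0"
  unfolding Pr_def by (rule sum_nonneg) auto

lemma Pr_pos:
  assumes "finite S" "\<And>w. w \<in> S \<Longrightarrow> pm w \<ge> 0" "w0 \<in> S" "pm w0 > 0" "E w0"
  shows "Pr S pm E > 0"
proof -
  have "pm w0 \<le> Pr S pm E"
    unfolding Pr_def by (rule member_le_sum) (use assms in auto)
  then show ?thesis using assms(4) by linarith
qed

lemma Pr_eq_0: "(\<And>w. w \<in> S \<Longrightarrow> \<not> E w) \<Longrightarrow> Pr S pm E = 0"
  unfolding Pr_def by (rule sum.neutral) auto

lemma sum_Pr_fibres: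
  assumes "finite S" "finite T" "G ` S \<subseteq> T"
  shows "(\<Sum>z\<in>T. Pr S pm (\<lambda>w. G w = z) * L z) = (\<Sum>w\<in>S. pm w * L (G w))"
proof -
  have "(\<Sum>w\<in>S. pm w * L (G w)) = (\<Sum>z\<in>T. \<Sum>w\<in>{w\<in>S. G w = z}. pm w * L (G w))"
    using sum.group[OF assms] by (rule sym)
  also have "\<dots> = (\<Sum>z\<in>T. Pr S pm (\<lambda>w. G w = z) * L z)"
    unfolding Pr_def sum_distrib_right by (rule sum.cong) auto
  finally show ?thesis by simp
qed

lemma sum_if_Pr_pos_fibres:
  assumes "finite S" "\<And>w. w \<in> S \<Longrightarrow> pm w \<ge> 0" "finite T" "G ` S \<subseteq> T"
  shows "(\<Sum>z\<in>T. if Pr S pm (\<lambda>w. G w = z) > 0 then Pr S pm (\<lambda>w. G w = z) * L z else 0)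
       = (\<Sum>w\<in>S. pm w * L (G w))"
proof -
  have "(\<Sum>z\<in>T. if Pr S pm (\<lambda>w. G w = z) > 0 then Pr S pm (\<lambda>w. G w = z) * L z else 0)
      = (\<Sum>z\<in>T. Pr S pm (\<lambda>w. G w = z) * L z)"
    by (rule sum.cong) (use Pr_nonneg[of S pm, OF assms(2)] in \<open>auto simp: order.strict_iff_order\<close>)
  also have "\<dots> = (\<Sum>w\<in>S. pm w * L (G w))"
    using sum_Pr_fibres[OF assms(1,3,4)] .
  finally show ?thesis .
qed

lemma sum_Pr_partition:
  assumes "finite S" "finite T" "B ` S \<subseteq> T"
  shows "(\<Sum>b\<in>T. Pr S pm (\<lambda>w. E w \<and> B w = b)) = Pr S pm E"
proof -
  have "Pr S pm E = (\<Sum>b\<in>T. \<Sum>w\<in>{w\<in>{w\<in>S. E w}. B w = b}. pm w)"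
    unfolding Pr_def by (rule sum.group[symmetric]) (use assms in auto)
  also have "\<dots> = (\<Sum>b\<in>T. Pr S pm (\<lambda>w. E w \<and> B w = b))"
    unfolding Pr_def by (rule sum.cong) (auto intro: sum.cong)
  finally show ?thesis by simp
qed

lemma sum_Pr_partition_image:
  "finite S \<Longrightarrow> (\<Sum>b\<in>B ` S. Pr S pm (\<lambda>w. E w \<and> B w = b)) = Pr S pm E"
  by (rule sum_Pr_partition) auto

lemma sum_eq_if_same_law:
  assumes "finite S" "\<And>z. Pr S pm1 (\<lambda>w. G w = z) = Pr S pm2 (\<lambda>w. G w = z)"
  shows "(\<Sum>w\<in>S. pm1 w * F (G w)) = (\<Sum>w\<in>S. pm2 w * F (G w))"
proof -
  have "(\<Sum>w\<in>S. pm w * F (G w)) = (\<Sum>z\<in>G ` S. Pr S pm (\<lambda>w. G w = z) * F z)" for pm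
    by (rule sum_Pr_fibres[symmetric]) (use assms(1) in auto)
  then show ?thesis
    using assms(2) by simp
qed

lemma Pr_eq_if_same_law:
  assumes "finite S" "\<And>z. Pr S pm1 (\<lambda>w. G w = z) = Pr S pm2 (\<lambda>w. G w = z)"
    and "\<And>w. w \<in> S \<Longrightarrow> E w = E' (G w)"
  shows "Pr S pm1 E = Pr S pm2 E"
proof -
  have "Pr S pm E = (\<Sum>w\<in>S. pm w * (if E' (G w) then 1 else 0))" for pm
    unfolding Pr_eq_sum_if[OF assms(1)] by (rule sum.cong) (auto simp: assms(3))
  then show ?thesis
    using sum_eq_if_same_law[OF assms(1,2), of "\<lambda>z. if E' z then 1 else 0"] by simp
qed

definition cmi_density :: "'w set \<Rightarrow> ('w \<Rightarrow> real) \<Rightarrow> ('w \<Rightarrow> 'b) \<Rightarrow> ('w \<Rightarrow> 'c) \<Rightarrow> ('w \<Rightarrow> 'd) \<Rightarrow> 'w \<Rightarrow> real"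
  where "cmi_density S pm A B C w =
    ln (Pr S pm (\<lambda>w'. A w' = A w \<and> B w' = B w \<and> C w' = C w) * Pr S pm (\<lambda>w'. C w' = C w)
        / (Pr S pm (\<lambda>w'. A w' = A w \<and> C w' = C w) * Pr S pm (\<lambda>w'. B w' = B w \<and> C w' = C w)))"

lemma cmi_eq_sum_density:
  assumes "finite S" "\<And>w. w \<in> S \<Longrightarrow> pm w \<ge> 0"
  shows "cmi S pm A B C = (\<Sum>w\<in>S. pm w * cmi_density S pm A B C w)"
proof -
  define K where "K w = (A w, B w, C w)" for w
  define L where "L = (\<lambda>(a, b, c). ln (Pr S pm (\<lambda>w. A w = a \<and> B w = b \<and> C w = c) * Pr S pm (\<lambda>w. C w = c)
      / (Pr S pm (\<lambda>w. A w = a \<and> C w = c) * Pr S pm (\<lambda>w. B w = b \<and> C w = c))))"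
  have "cmi S pm A B C = (\<Sum>z\<in>A ` S \<times> B ` S \<times> C ` S.
      if Pr S pm (\<lambda>w. K w = z) > 0 then Pr S pm (\<lambda>w. K w = z) * L z else 0)"
    unfolding cmi_def Let_def L_def K_def by (rule sum.cong) auto
  also have "\<dots> = (\<Sum>w\<in>S. pm w * L (K w))"
    by (rule sum_if_Pr_pos_fibres) (auto simp: assms K_def)
  finally show ?thesis
    unfolding cmi_density_def L_def K_def by simp
qed

lemma cmi_cong:
  assumes "\<And>w. w \<in> S \<Longrightarrow> A w = A' w" "\<And>w. w \<in> S \<Longrightarrow> B w = B' w" "\<And>w. w \<in> S \<Longrightarrow> C w = C' w"
  shows "cmi S pm A B C = cmi S pm A' B' C'"
proof -
  have "A ` S = A' ` S" "B ` S = B' ` S" "C ` S = C' ` S"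
    using assms by auto
  moreover have "Pr S pm (\<lambda>w. A w = a \<and> B w = b \<and> C w = c) = Pr S pm (\<lambda>w. A' w = a \<and> B' w = b \<and> C' w = c)"
    "Pr S pm (\<lambda>w. C w = c) = Pr S pm (\<lambda>w. C' w = c)"
    "Pr S pm (\<lambda>w. A w = a \<and> C w = c) = Pr S pm (\<lambda>w. A' w = a \<and> C' w = c)"
    "Pr S pm (\<lambda>w. B w = b \<and> C w = c) = Pr S pm (\<lambda>w. B' w = b \<and> C' w = c)"
    for a b c by (rule Pr_cong; simp add: assms)+
  ultimately show ?thesis
    unfolding cmi_def by simp
qed

lemma cmi_eq_if_same_law:
  assumes "finite S" "\<And>z. Pr S pm1 (\<lambda>w. G w = z) = Pr S pm2 (\<lambda>w. G w = z)"
    and "\<And>w. w \<in> S \<Longrightarrow> A w = A' (G w)" "\<And>w. w \<in> S \<Longrightarrow> B w = B' (G w)"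
    "\<And>w. w \<in> S \<Longrightarrow> C w = C' (G w)"
  shows "cmi S pm1 A B C = cmi S pm2 A B C"
proof -
  have "Pr S pm1 (\<lambda>w. A w = a \<and> B w = b \<and> C w = c) = Pr S pm2 (\<lambda>w. A w = a \<and> B w = b \<and> C w = c)"
    "Pr S pm1 (\<lambda>w. C w = c) = Pr S pm2 (\<lambda>w. C w = c)"
    "Pr S pm1 (\<lambda>w. A w = a \<and> C w = c) = Pr S pm2 (\<lambda>w. A w = a \<and> C w = c)"
    "Pr S pm1 (\<lambda>w. B w = b \<and> C w = c) = Pr S pm2 (\<lambda>w. B w = b \<and> C w = c)"
    for a b c by (rule Pr_eq_if_same_law[OF assms(1,2)], simp add: assms(3-5))+
  then show ?thesis
    unfolding cmi_def by simp
qed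

lemma Pr_comp_factor:
  assumes "finite S"
    and factor: "\<And>a b c. a \<in> A ` S \<Longrightarrow> b \<in> B ` S \<Longrightarrow> c \<in> C ` S \<Longrightarrow>
      Pr S pm (\<lambda>w. A w = a \<and> B w = b \<and> C w = c) = Pr S pm (\<lambda>w. A w = a \<and> C w = c) * \<kappa> (f a) b c"
    and "b \<in> B ` S" "c \<in> C ` S"
  shows "Pr S pm (\<lambda>w. f (A w) = \<alpha> \<and> B w = b \<and> C w = c) = Pr S pm (\<lambda>w. f (A w) = \<alpha> \<and> C w = c) * \<kappa> \<alpha> b c"
proof -
  let ?F = "{a \<in> A ` S. f a = \<alpha>}"
  have split: "Pr S pm (\<lambda>w. f (A w) = \<alpha> \<and> E w) = (\<Sum>a\<in>?F. Pr S pm (\<lambda>w. A w = a \<and> E w))" for E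
  proof -
    have "Pr S pm (\<lambda>w. f (A w) = \<alpha> \<and> E w) = (\<Sum>a\<in>A ` S. Pr S pm (\<lambda>w. (f (A w) = \<alpha> \<and> E w) \<and> A w = a))"
      by (rule sum_Pr_partition_image[OF assms(1), symmetric])
    also have "\<dots> = (\<Sum>a\<in>A ` S. if f a = \<alpha> then Pr S pm (\<lambda>w. A w = a \<and> E w) else 0)"
      by (rule sum.cong) (auto intro: Pr_cong Pr_eq_0)
    finally show ?thesis
      using assms(1) by (simp add: sum.inter_filter)
  qed
  have "Pr S pm (\<lambda>w. f (A w) = \<alpha> \<and> B w = b \<and> C w = c) = (\<Sum>a\<in>?F. Pr S pm (\<lambda>w. A w = a \<and> B w = b \<and> C w = c))"
    by (rule split)
  also have "\<dots> = (\<Sum>a\<in>?F. Pr S pm (\<lambda>w. A w = a \<and> C w = c) * \<kappa> \<alpha> b c)"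
    by (rule sum.cong) (use factor assms(3,4) in auto)
  also have "\<dots> = Pr S pm (\<lambda>w. f (A w) = \<alpha> \<and> C w = c) * \<kappa> \<alpha> b c"
    by (simp add: split sum_distrib_right)
  finally show ?thesis .
qed

lemma cmi_comp_eq_if_factor:
  assumes fin: "finite S" and nonneg: "\<And>w. w \<in> S \<Longrightarrow> pm w \<ge> 0"
    and factor: "\<And>a b c. a \<in> A ` S \<Longrightarrow> b \<in> B ` S \<Longrightarrow> c \<in> C ` S \<Longrightarrow>
      Pr S pm (\<lambda>w. A w = a \<and> B w = b \<and> C w = c) = Pr S pm (\<lambda>w. A w = a \<and> C w = c) * \<kappa> (f a) b c"
  shows "cmi S pm (\<lambda>w. f (A w)) B C = cmi S pm A B C"
proof -
  have density: "cmi_density S pm (\<lambda>w. f (A w)) B C w = cmi_density S pm A B C w"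
    if w: "w \<in> S" "pm w > 0" for w
  proof -
    let ?k = "\<kappa> (f (A w)) (B w) (C w)"
    have "Pr S pm (\<lambda>w'. A w' = A w \<and> B w' = B w \<and> C w' = C w) = Pr S pm (\<lambda>w'. A w' = A w \<and> C w' = C w) * ?k"
      using factor w(1) by blast
    moreover have "Pr S pm (\<lambda>w'. f (A w') = f (A w) \<and> B w' = B w \<and> C w' = C w)
        = Pr S pm (\<lambda>w'. f (A w') = f (A w) \<and> C w' = C w) * ?k"
      by (rule Pr_comp_factor[where \<kappa>=\<kappa>, OF fin factor]) (use w in auto)
    moreover have "Pr S pm (\<lambda>w'. A w' = A w \<and> C w' = C w) > 0"
      "Pr S pm (\<lambda>w'. f (A w') = f (A w) \<and> C w' = C w) > 0"
      using Pr_pos[where pm=pm, OF fin nonneg w] by auto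
    ultimately show ?thesis
      unfolding cmi_density_def by simp
  qed
  have weighted: "pm w * cmi_density S pm (\<lambda>w. f (A w)) B C w = pm w * cmi_density S pm A B C w"
    if "w \<in> S" for w
    using density[OF that] nonneg[OF that] by (cases "pm w > 0") auto
  have "cmi S pm (\<lambda>w. f (A w)) B C = (\<Sum>w\<in>S. pm w * cmi_density S pm (\<lambda>w. f (A w)) B C w)"
    using fin nonneg by (rule cmi_eq_sum_density)
  also have "\<dots> = (\<Sum>w\<in>S. pm w * cmi_density S pm A B C w)"
    by (rule sum.cong[OF refl]) (rule weighted)
  also have "\<dots> = cmi S pm A B C"
    using fin nonneg by (rule cmi_eq_sum_density[symmetric])
  finally show ?thesis .
qed

text \<open>The likelihood ratio of the conditional laws of \<open>B\<close> given \<open>(f A, C)\<close> and given \<open>(A, C)\<close>.\<close>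

definition comp_likelihood_ratio ::
    "'w set \<Rightarrow> ('w \<Rightarrow> real) \<Rightarrow> ('a \<Rightarrow> 'e) \<Rightarrow> ('w \<Rightarrow> 'a) \<Rightarrow> ('w \<Rightarrow> 'b) \<Rightarrow> ('w \<Rightarrow> 'c) \<Rightarrow> 'w \<Rightarrow> real" where
  "comp_likelihood_ratio S pm f A B C w =
    Pr S pm (\<lambda>w'. A w' = A w \<and> C w' = C w) * Pr S pm (\<lambda>w'. f (A w') = f (A w) \<and> B w' = B w \<and> C w' = C w)
    / (Pr S pm (\<lambda>w'. f (A w') = f (A w) \<and> C w' = C w) * Pr S pm (\<lambda>w'. A w' = A w \<and> B w' = B w \<and> C w' = C w))"

lemma sum_comp_likelihood_ratio_le:
  assumes fin: "finite S" and nonneg: "\<And>w. w \<in> S \<Longrightarrow> pm w \<ge> 0"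
  shows "(\<Sum>w\<in>S. pm w * comp_likelihood_ratio S pm f A B C w) \<le> (\<Sum>w\<in>S. pm w)"
proof -
  define K where "K w = (A w, B w, C w)" for w
  define h where "h = (\<lambda>(a, b, c). Pr S pm (\<lambda>w. A w = a \<and> C w = c)
    * Pr S pm (\<lambda>w. f (A w) = f a \<and> B w = b \<and> C w = c) / Pr S pm (\<lambda>w. f (A w) = f a \<and> C w = c))"
  have h_nonneg: "h z \<ge> 0" for z
    unfolding h_def using Pr_nonneg[of S pm, OF nonneg] by (auto split: prod.splits)
  have "(\<Sum>w\<in>S. pm w * comp_likelihood_ratio S pm f A B C w)
      = (\<Sum>w\<in>S. pm w * (h (K w) / Pr S pm (\<lambda>w'. K w' = K w)))"
    unfolding comp_likelihood_ratio_def h_def K_def by (simp add: field_simps)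
  also have "\<dots> = (\<Sum>z\<in>K ` S. Pr S pm (\<lambda>w. K w = z) * (h z / Pr S pm (\<lambda>w. K w = z)))"
    by (rule sum_Pr_fibres[symmetric]) (use fin in auto)
  also have "\<dots> \<le> (\<Sum>z\<in>K ` S. h z)"
    by (rule sum_mono) (use h_nonneg in \<open>simp add: divide_le_eq_1\<close>)
  also have "\<dots> \<le> (\<Sum>z\<in>A ` S \<times> B ` S \<times> C ` S. h z)"
    by (rule sum_mono2) (auto simp: fin h_nonneg K_def)
  also have "\<dots> = (\<Sum>a\<in>A ` S. \<Sum>c\<in>C ` S. \<Sum>b\<in>B ` S. h (a, b, c))"
    by (simp add: sum.cartesian_product' sum.swap[of _ "B ` S"])
  also have "\<dots> \<le> (\<Sum>a\<in>A ` S. \<Sum>c\<in>C ` S. Pr S pm (\<lambda>w. A w = a \<and> C w = c))"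
  proof (intro sum_mono)
    fix a c
    have "(\<Sum>b\<in>B ` S. Pr S pm (\<lambda>w. f (A w) = f a \<and> B w = b \<and> C w = c)) = Pr S pm (\<lambda>w. f (A w) = f a \<and> C w = c)"
      using sum_Pr_partition_image[OF fin, where E="\<lambda>w. f (A w) = f a \<and> C w = c" and B=B and pm=pm]
      by (simp add: conj_ac)
    then have "(\<Sum>b\<in>B ` S. h (a, b, c)) = Pr S pm (\<lambda>w. A w = a \<and> C w = c)
        * (Pr S pm (\<lambda>w. f (A w) = f a \<and> C w = c) / Pr S pm (\<lambda>w. f (A w) = f a \<and> C w = c))"
      unfolding h_def by (simp add: sum_divide_distrib[symmetric] sum_distrib_left[symmetric])
    then show "(\<Sum>b\<in>B ` S. h (a, b, c)) \<le> Pr S pm (\<lambda>w. A w = a \<and> C w = c)"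
      using Pr_nonneg[of S pm, OF nonneg] by (simp add: mult_left_le divide_le_eq_1)
  qed
  also have "\<dots> = (\<Sum>a\<in>A ` S. Pr S pm (\<lambda>w. A w = a))"
    using sum_Pr_partition_image[OF fin, where B=C and pm=pm] by simp
  also have "\<dots> = (\<Sum>w\<in>S. pm w)"
    using sum_Pr_partition_image[OF fin, where B=A and pm=pm and E="\<lambda>_. True"] by (simp add: Pr_def)
  finally show ?thesis .
qed

lemma cmi_density_comp:
  assumes fin: "finite S" and nonneg: "\<And>w. w \<in> S \<Longrightarrow> pm w \<ge> 0" and w: "w \<in> S" "pm w > 0"
  shows "comp_likelihood_ratio S pm f A B C w > 0"
    "cmi_density S pm (\<lambda>w. f (A w)) B C w = cmi_density S pm A B C w + ln (comp_likelihood_ratio S pm f A B C w)"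
proof -
  let ?P = "\<lambda>E. Pr S pm E" and ?r = "comp_likelihood_ratio S pm f A B C w"
  have pos: "?P (\<lambda>w'. A w' = A w \<and> B w' = B w \<and> C w' = C w) > 0" "?P (\<lambda>w'. C w' = C w) > 0"
    "?P (\<lambda>w'. A w' = A w \<and> C w' = C w) > 0" "?P (\<lambda>w'. B w' = B w \<and> C w' = C w) > 0"
    "?P (\<lambda>w'. f (A w') = f (A w) \<and> B w' = B w \<and> C w' = C w) > 0"
    "?P (\<lambda>w'. f (A w') = f (A w) \<and> C w' = C w) > 0"
    by (auto intro!: Pr_pos[where pm=pm, OF fin nonneg w])
  then show "?r > 0"
    unfolding comp_likelihood_ratio_def by simp
  have "?P (\<lambda>w'. f (A w') = f (A w) \<and> B w' = B w \<and> C w' = C w) * ?P (\<lambda>w'. C w' = C w)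
      / (?P (\<lambda>w'. f (A w') = f (A w) \<and> C w' = C w) * ?P (\<lambda>w'. B w' = B w \<and> C w' = C w))
    = ?P (\<lambda>w'. A w' = A w \<and> B w' = B w \<and> C w' = C w) * ?P (\<lambda>w'. C w' = C w)
      / (?P (\<lambda>w'. A w' = A w \<and> C w' = C w) * ?P (\<lambda>w'. B w' = B w \<and> C w' = C w)) * ?r"
    (is "?lhs = ?rhs * ?r")
    unfolding comp_likelihood_ratio_def using pos by (simp add: field_simps)
  then have "cmi_density S pm (\<lambda>w. f (A w)) B C w = ln (?rhs * ?r)"
    unfolding cmi_density_def by (rule arg_cong)
  also have "\<dots> = cmi_density S pm A B C w + ln ?r"
    unfolding cmi_density_def using pos \<open>?r > 0\<close> by (intro ln_mult_pos) simp_all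
  finally show "cmi_density S pm (\<lambda>w. f (A w)) B C w = cmi_density S pm A B C w + ln ?r" .
qed

text \<open>The two densities differ by \<open>ln r\<close> for the likelihood ratio \<open>r\<close> above,
  and \<open>ln r \<le> r - 1\<close> while \<open>E[r] \<le> 1\<close>.\<close>

lemma cmi_comp_le:
  assumes fin: "finite S" and nonneg: "\<And>w. w \<in> S \<Longrightarrow> pm w \<ge> 0"
  shows "cmi S pm (\<lambda>w. f (A w)) B C \<le> cmi S pm A B C"
proof -
  let ?r = "comp_likelihood_ratio S pm f A B C"
  have pointwise: "pm w * cmi_density S pm (\<lambda>w. f (A w)) B C w
      \<le> pm w * cmi_density S pm A B C w + pm w * (?r w - 1)" if w: "w \<in> S" for w
  proof (cases "pm w > 0")
    case True
    then have "cmi_density S pm (\<lambda>w. f (A w)) B C w \<le> cmi_density S pm A B C w + (?r w - 1)"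
      using cmi_density_comp[where pm=pm and f=f and A=A and B=B and C=C, OF fin nonneg w True] ln_le_minus_one[of "?r w"] by simp
    then show ?thesis
      using True by (simp add: distrib_left[symmetric] mult_left_mono)
  qed (use nonneg[OF w] in simp)
  have "cmi S pm (\<lambda>w. f (A w)) B C = (\<Sum>w\<in>S. pm w * cmi_density S pm (\<lambda>w. f (A w)) B C w)"
    using fin nonneg by (rule cmi_eq_sum_density)
  also have "\<dots> \<le> (\<Sum>w\<in>S. pm w * cmi_density S pm A B C w + pm w * (?r w - 1))"
    by (rule sum_mono) (rule pointwise)
  also have "\<dots> = cmi S pm A B C + ((\<Sum>w\<in>S. pm w * ?r w) - (\<Sum>w\<in>S. pm w))"
    using cmi_eq_sum_density[of S pm A B C, OF fin nonneg]
    by (simp add: sum.distrib sum_subtractf algebra_simps)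
  also have "\<dots> \<le> cmi S pm A B C"
    using sum_comp_likelihood_ratio_le[where f=f and A=A and B=B and C=C, OF fin nonneg] by simp
  finally show ?thesis .
qed

section \<open>Trajectories and released locations\<close>

definition chain_step :: "('a \<Rightarrow> real) \<Rightarrow> ('a \<Rightarrow> 'a \<Rightarrow> real) \<Rightarrow> 'a list \<Rightarrow> 'a \<Rightarrow> real" where
  "chain_step p1 Q xs x = (if xs = [] then p1 x else Q (last xs) x)"

lemma joint_snoc:
  assumes "length xs = n" "length ys = n"
  shows "joint p1 Q q (Suc n) (xs @ [x], ys @ [y])
    = joint p1 Q q n (xs, ys) * chain_step p1 Q xs x * q (Suc n) (xs @ [x]) ys y"
proof (cases n)
  case 0
  then show ?thesis
    using assms by (simp add: joint_def chain_step_def)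
next
  case (Suc m)
  let ?F = "\<lambda>xs ys t. Q (xs ! (t - 2)) (xs ! (t - 1)) * q t (take t xs) (take (t - 1) ys) (ys ! (t - 1))"
  have xs_ne: "xs \<noteq> []" and ys_ne: "ys \<noteq> []"
    using assms Suc by auto
  have heads: "(xs @ [x]) ! 0 = xs ! 0" "(ys @ [y]) ! 0 = ys ! 0"
    using xs_ne ys_ne by (simp_all add: nth_append)
  have old: "(\<Prod>t\<in>{2..n}. ?F (xs @ [x]) (ys @ [y]) t) = (\<Prod>t\<in>{2..n}. ?F xs ys t)"
    by (rule prod.cong) (use assms Suc in \<open>auto simp: nth_append\<close>)
  have new: "?F (xs @ [x]) (ys @ [y]) (Suc n) = chain_step p1 Q xs x * q (Suc n) (xs @ [x]) ys y"
    using assms xs_ne Suc by (simp add: nth_append last_conv_nth chain_step_def)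
  have "{2..Suc n} = insert (Suc n) {2..n}"
    using Suc by auto
  then have "(\<Prod>t\<in>{2..Suc n}. ?F (xs @ [x]) (ys @ [y]) t)
      = ?F (xs @ [x]) (ys @ [y]) (Suc n) * (\<Prod>t\<in>{2..n}. ?F (xs @ [x]) (ys @ [y]) t)"
    by (simp only:) (rule prod.insert, auto)
  also have "\<dots> = chain_step p1 Q xs x * q (Suc n) (xs @ [x]) ys y * (\<Prod>t\<in>{2..n}. ?F xs ys t)"
    by (simp only: new old)
  finally have prod_Suc: "(\<Prod>t\<in>{2..Suc n}. ?F (xs @ [x]) (ys @ [y]) t)
      = chain_step p1 Q xs x * q (Suc n) (xs @ [x]) ys y * (\<Prod>t\<in>{2..n}. ?F xs ys t)" .
  have "joint p1 Q q (Suc n) (xs @ [x], ys @ [y])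
      = p1 (xs ! 0) * q 1 [xs ! 0] [] (ys ! 0) * (\<Prod>t\<in>{2..Suc n}. ?F (xs @ [x]) (ys @ [y]) t)"
    by (simp only: joint_def prod.case nat.distinct if_False heads)
  moreover have "joint p1 Q q n (xs, ys) = p1 (xs ! 0) * q 1 [xs ! 0] [] (ys ! 0) * (\<Prod>t\<in>{2..n}. ?F xs ys t)"
    using Suc by (simp only: joint_def prod.case nat.distinct if_False)
  ultimately show ?thesis
    unfolding prod_Suc by (simp only: mult_ac)
qed

lemma snoc_in_lists_n_Suc: "xs @ [x] \<in> lists_n W (Suc n) \<longleftrightarrow> xs \<in> lists_n W n \<and> x \<in> W"
  unfolding lists_n_def by auto

lemma lists_n_Suc: "lists_n W (Suc n) = (\<lambda>(xs, x). xs @ [x]) ` (lists_n W n \<times> W)"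
proof (intro equalityI subsetI)
  fix xs
  assume xs: "xs \<in> lists_n W (Suc n)"
  then have "xs \<noteq> []"
    unfolding lists_n_def by auto
  then have "xs = butlast xs @ [last xs]" "(butlast xs, last xs) \<in> lists_n W n \<times> W"
    using xs unfolding lists_n_def by (auto dest: in_set_butlastD)
  then show "xs \<in> (\<lambda>(xs, x). xs @ [x]) ` (lists_n W n \<times> W)"
    by (auto intro!: image_eqI)
qed (auto simp: snoc_in_lists_n_Suc)

lemma sum_lists_n_Suc: "(\<Sum>v\<in>lists_n W (Suc n). F v) = (\<Sum>u\<in>lists_n W n. \<Sum>x\<in>W. F (u @ [x]))"
proof -
  have inj: "inj_on (\<lambda>(xs, x). xs @ [x]) (lists_n W n \<times> W)"
    by (auto simp: inj_on_def)
  show ?thesis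
    unfolding lists_n_Suc sum.reindex[OF inj] by (simp add: sum.cartesian_product' split_def)
qed

lemma sum_Omega_Suc:
  "(\<Sum>\<omega>\<in>Omega W (Suc n). F \<omega>) = (\<Sum>(xs, ys)\<in>Omega W n. \<Sum>x\<in>W. \<Sum>y\<in>W. F (xs @ [x], ys @ [y]))"
proof -
  have "(\<Sum>\<omega>\<in>Omega W (Suc n). F \<omega>) = (\<Sum>v1\<in>lists_n W (Suc n). \<Sum>v2\<in>lists_n W (Suc n). F (v1, v2))"
    unfolding Omega_def by (rule sum.cartesian_product')
  also have "\<dots> = (\<Sum>u\<in>lists_n W n. \<Sum>x\<in>W. \<Sum>v\<in>lists_n W n. \<Sum>y\<in>W. F (u @ [x], v @ [y]))"
    by (simp add: sum_lists_n_Suc)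
  also have "\<dots> = (\<Sum>u\<in>lists_n W n. \<Sum>v\<in>lists_n W n. \<Sum>x\<in>W. \<Sum>y\<in>W. F (u @ [x], v @ [y]))"
    by (rule sum.cong[OF refl]) (rule sum.swap)
  also have "\<dots> = (\<Sum>(xs, ys)\<in>Omega W n. \<Sum>x\<in>W. \<Sum>y\<in>W. F (xs @ [x], ys @ [y]))"
    unfolding Omega_def
    by (rule sum.cartesian_product'[symmetric, where g="\<lambda>(xs, ys). \<Sum>x\<in>W. \<Sum>y\<in>W. F (xs @ [x], ys @ [y])", simplified])
  finally show ?thesis .
qed

lemma Omega_0: "Omega W 0 = {([], [])}"
  unfolding Omega_def lists_n_def by auto

lemma prev_snoc: "prev (xs @ [a]) = (if xs = [] then None else Some (last xs))"
  unfolding prev_def by (cases xs rule: rev_cases) (auto simp: nth_append)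

lemma last_take_Suc: "s < length xs \<Longrightarrow> last (take (Suc s) xs) = xs ! s"
  by (simp add: take_Suc_conv_app_nth)

lemma dist_avg_eq_sum_expectations:
  "dist_avg W p1 Q q d n
    = (1 / real n) * (\<Sum>t = 1..n. \<Sum>\<omega>\<in>Omega W n. joint p1 Q q n \<omega> * d (fst \<omega> ! (t - 1)) (snd \<omega> ! (t - 1)))"
  unfolding dist_avg_def split_def
  by (simp add: sum_distrib_left algebra_simps, rule sum.swap)

locale markov_policy =
  fixes W :: "'a set" and p1 :: "'a \<Rightarrow> real" and Q :: "'a \<Rightarrow> 'a \<Rightarrow> real"
    and q :: "nat \<Rightarrow> 'a list \<Rightarrow> 'a list \<Rightarrow> 'a \<Rightarrow> real"
  assumes finite_W: "finite W" and markov: "markov_chain W p1 Q" and policy: "q \<in> QH W"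
begin

abbreviation J :: "nat \<Rightarrow> 'a list \<times> 'a list \<Rightarrow> real" where
  "J n \<equiv> joint p1 Q q n"

abbreviation Prob :: "nat \<Rightarrow> ('a list \<times> 'a list \<Rightarrow> bool) \<Rightarrow> real" where
  "Prob n E \<equiv> Pr (Omega W n) (J n) E"

lemma finite_lists_n: "finite (lists_n W n)"
  unfolding lists_n_def using finite_lists_length_eq[OF finite_W] .

lemma finite_Omega: "finite (Omega W n)"
  unfolding Omega_def using finite_lists_n by simp

lemma chain_step_nonneg:
  assumes "set xs \<subseteq> W" "x \<in> W"
  shows "chain_step p1 Q xs x \<ge> 0"
proof -
  have "xs \<noteq> [] \<Longrightarrow> last xs \<in> W"
    using assms(1) last_in_set by blast
  then show ?thesis
    using markov assms(2) unfolding chain_step_def markov_chain_def by auto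
qed

lemma sum_chain_step:
  assumes "set xs \<subseteq> W"
  shows "(\<Sum>x\<in>W. chain_step p1 Q xs x) = 1"
proof (cases "xs = []")
  case False
  then have "last xs \<in> W"
    using assms last_in_set by blast
  then show ?thesis
    using markov False unfolding chain_step_def markov_chain_def by simp
qed (use markov in \<open>simp add: chain_step_def markov_chain_def\<close>)

lemma policy_nonneg: "xs \<in> lists_n W (Suc s) \<Longrightarrow> ys \<in> lists_n W s \<Longrightarrow> y \<in> W \<Longrightarrow> q (Suc s) xs ys y \<ge> 0"
  using policy unfolding QH_def by fastforce

lemma sum_policy: "xs \<in> lists_n W (Suc s) \<Longrightarrow> ys \<in> lists_n W s \<Longrightarrow> (\<Sum>y\<in>W. q (Suc s) xs ys y) = 1"
  using policy unfolding QH_def by fastforce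

lemma joint_nonneg: "\<omega> \<in> Omega W n \<Longrightarrow> J n \<omega> \<ge> 0"
proof (induction n arbitrary: \<omega>)
  case 0
  then show ?case by (simp add: Omega_0 joint_def)
next
  case (Suc n)
  then obtain xs x ys y where \<omega>: "\<omega> = (xs @ [x], ys @ [y])"
    and mem: "xs \<in> lists_n W n" "x \<in> W" "ys \<in> lists_n W n" "y \<in> W"
    unfolding Omega_def lists_n_Suc by auto
  then have l: "length xs = n" "length ys = n" "set xs \<subseteq> W"
    unfolding lists_n_def by auto
  have "J n (xs, ys) \<ge> 0"
    using Suc.IH mem unfolding Omega_def by auto
  moreover have "chain_step p1 Q xs x \<ge> 0"
    using l mem by (intro chain_step_nonneg)
  moreover have "q (Suc n) (xs @ [x]) ys y \<ge> 0"
    using mem by (intro policy_nonneg) (auto simp: snoc_in_lists_n_Suc)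
  ultimately show ?case
    unfolding \<omega> joint_snoc[OF l(1,2)] by simp
qed

lemma sum_joint_snoc:
  assumes "(xs, ys) \<in> Omega W n"
  shows "(\<Sum>x\<in>W. \<Sum>y\<in>W. J (Suc n) (xs @ [x], ys @ [y])) = J n (xs, ys)"
proof -
  have l: "length xs = n" "length ys = n" "set xs \<subseteq> W" "xs \<in> lists_n W n" "ys \<in> lists_n W n"
    using assms unfolding Omega_def lists_n_def by auto
  have "(\<Sum>x\<in>W. \<Sum>y\<in>W. J (Suc n) (xs @ [x], ys @ [y]))
      = (\<Sum>x\<in>W. J n (xs, ys) * chain_step p1 Q xs x * (\<Sum>y\<in>W. q (Suc n) (xs @ [x]) ys y))"
    unfolding joint_snoc[OF l(1,2)] by (simp add: sum_distrib_left)
  also have "\<dots> = (\<Sum>x\<in>W. J n (xs, ys) * chain_step p1 Q xs x)"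
    by (rule sum.cong[OF refl]) (simp add: sum_policy snoc_in_lists_n_Suc l)
  also have "\<dots> = J n (xs, ys)"
    by (simp add: sum_distrib_left[symmetric] sum_chain_step l)
  finally show ?thesis .
qed

lemma sum_joint_take:
  assumes "t \<le> n"
  shows "(\<Sum>(xs, ys)\<in>Omega W n. J n (xs, ys) * f (take t xs) (take t ys)) = (\<Sum>(u, v)\<in>Omega W t. J t (u, v) * f u v)"
  using assms
proof (induction n rule: dec_induct)
  case base
  show ?case
    by (rule sum.cong[OF refl]) (auto simp: Omega_def lists_n_def)
next
  case (step n)
  have "(\<Sum>(xs, ys)\<in>Omega W (Suc n). J (Suc n) (xs, ys) * f (take t xs) (take t ys))
     = (\<Sum>(xs, ys)\<in>Omega W n. \<Sum>x\<in>W. \<Sum>y\<in>W. J (Suc n) (xs @ [x], ys @ [y]) * f (take t (xs @ [x])) (take t (ys @ [y])))"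
    by (subst sum_Omega_Suc) (simp add: split_def)
  also have "\<dots> = (\<Sum>(xs, ys)\<in>Omega W n. (\<Sum>x\<in>W. \<Sum>y\<in>W. J (Suc n) (xs @ [x], ys @ [y])) * f (take t xs) (take t ys))"
  proof (rule sum.cong[OF refl], clarify)
    fix xs ys
    assume "(xs, ys) \<in> Omega W n"
    then have "length xs = n" "length ys = n"
      unfolding Omega_def lists_n_def by auto
    with step.hyps show "(\<Sum>x\<in>W. \<Sum>y\<in>W. J (Suc n) (xs @ [x], ys @ [y]) * f (take t (xs @ [x])) (take t (ys @ [y])))
       = (\<Sum>x\<in>W. \<Sum>y\<in>W. J (Suc n) (xs @ [x], ys @ [y])) * f (take t xs) (take t ys)"
      by (simp add: sum_distrib_right)
  qed
  also have "\<dots> = (\<Sum>(xs, ys)\<in>Omega W n. J n (xs, ys) * f (take t xs) (take t ys))"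
    by (rule sum.cong[OF refl]) (auto simp: sum_joint_snoc)
  finally show ?case
    using step.IH by simp
qed

lemma Prob_take:
  assumes "t \<le> n" "\<And>xs ys. (xs, ys) \<in> Omega W n \<Longrightarrow> E (xs, ys) = E' (take t xs, take t ys)"
  shows "Prob n E = Prob t E'"
proof -
  have "Prob n E = (\<Sum>(xs, ys)\<in>Omega W n. J n (xs, ys) * (\<lambda>u v. if E' (u, v) then 1 else 0) (take t xs) (take t ys))"
    unfolding Pr_eq_sum_if[OF finite_Omega] by (rule sum.cong[OF refl]) (auto simp: assms(2))
  also have "\<dots> = (\<Sum>(u, v)\<in>Omega W t. J t (u, v) * (if E' (u, v) then 1 else 0))"
    by (rule sum_joint_take[OF assms(1)])
  also have "\<dots> = Prob t E'"
    unfolding Pr_eq_sum_if[OF finite_Omega] by (rule sum.cong[OF refl]) auto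
  finally show ?thesis .
qed

lemma Prob_True: "Prob n (\<lambda>_. True) = 1"
proof -
  have "Prob n (\<lambda>_. True) = Prob 0 (\<lambda>_. True)"
    by (rule Prob_take) auto
  then show ?thesis
    by (simp add: Omega_0 Pr_def joint_def)
qed

lemma Prob_point: "\<omega>0 \<in> Omega W n \<Longrightarrow> Prob n (\<lambda>\<omega>. \<omega> = \<omega>0) = J n \<omega>0"
  unfolding Pr_eq_sum_if[OF finite_Omega] by (simp add: finite_Omega)

lemma Prob_Suc: "Prob (Suc s) E = (\<Sum>(xs, ys)\<in>Omega W s. \<Sum>x\<in>W. \<Sum>y\<in>W.
    if E (xs @ [x], ys @ [y]) then J s (xs, ys) * chain_step p1 Q xs x * q (Suc s) (xs @ [x]) ys y else 0)"
  unfolding Pr_eq_sum_if[OF finite_Omega] sum_Omega_Suc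
proof (rule sum.cong[OF refl], clarify)
  fix xs ys
  assume "(xs, ys) \<in> Omega W s"
  then have "length xs = s" "length ys = s"
    unfolding Omega_def lists_n_def by auto
  then show "(\<Sum>x\<in>W. \<Sum>y\<in>W. if E (xs @ [x], ys @ [y]) then J (Suc s) (xs @ [x], ys @ [y]) else 0)
    = (\<Sum>x\<in>W. \<Sum>y\<in>W. if E (xs @ [x], ys @ [y]) then J s (xs, ys) * chain_step p1 Q xs x * q (Suc s) (xs @ [x]) ys y else 0)"
    by (intro sum.cong refl) (simp add: joint_snoc)
qed

lemma Omega_take:
  assumes "s \<le> n" "(xs, ys) \<in> Omega W n"
  shows "(take s xs, take s ys) \<in> Omega W s"
  using assms unfolding Omega_def lists_n_def by (auto dest: in_set_takeD)

lemma Omega_nth: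
  assumes "s < n" "(xs, ys) \<in> Omega W n"
  shows "xs ! s \<in> W" "ys ! s \<in> W"
  using assms unfolding Omega_def lists_n_def by auto

lemma sum_Prob_release:
  assumes "s < n"
  shows "(\<Sum>y\<in>W. Prob n (\<lambda>\<omega>. E \<omega> \<and> snd \<omega> ! s = y)) = Prob n E"
  by (rule sum_Pr_partition[OF finite_Omega finite_W]) (use Omega_nth[OF assms] in auto)

lemma sum_Prob_history:
  assumes "s \<le> n"
  shows "(\<Sum>w\<in>lists_n W s. Prob n (\<lambda>\<omega>. E \<omega> \<and> take s (snd \<omega>) = w)) = Prob n E"
  by (rule sum_Pr_partition[OF finite_Omega finite_lists_n])
    (use Omega_take[OF assms] in \<open>auto simp: Omega_def\<close>)

lemma Prob_take_eq_joint:
  assumes "s \<le> n" "(u, w) \<in> Omega W s"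
  shows "Prob n (\<lambda>(xs, ys). take s xs = u \<and> take s ys = w) = J s (u, w)"
proof -
  have "Prob n (\<lambda>(xs, ys). take s xs = u \<and> take s ys = w) = Prob s (\<lambda>\<omega>. \<omega> = (u, w))"
    by (rule Prob_take[OF assms(1)]) auto
  then show ?thesis
    using Prob_point[OF assms(2)] by simp
qed

lemma Prob_take_Suc_release:
  assumes "Suc s \<le> n" "(u, w) \<in> Omega W s" "a \<in> W" "y \<in> W"
  shows "Prob n (\<lambda>(xs, ys). take (Suc s) xs = u @ [a] \<and> ys ! s = y \<and> take s ys = w)
    = J s (u, w) * chain_step p1 Q u a * q (Suc s) (u @ [a]) w y"
proof -
  have "Prob n (\<lambda>(xs, ys). take (Suc s) xs = u @ [a] \<and> ys ! s = y \<and> take s ys = w)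
      = Prob n (\<lambda>(xs, ys). take (Suc s) xs = u @ [a] \<and> take (Suc s) ys = w @ [y])"
    by (rule Pr_cong) (use assms(1) in \<open>auto simp: Omega_def lists_n_def take_Suc_conv_app_nth\<close>)
  also have "\<dots> = J (Suc s) (u @ [a], w @ [y])"
    by (rule Prob_take_eq_joint) (use assms in \<open>auto simp: Omega_def snoc_in_lists_n_Suc\<close>)
  also have "\<dots> = J s (u, w) * chain_step p1 Q u a * q (Suc s) (u @ [a]) w y"
    by (rule joint_snoc) (use assms(2) in \<open>auto simp: Omega_def lists_n_def\<close>)
  finally show ?thesis .
qed

lemma Prob_take_Suc_pre_release:
  assumes "Suc s \<le> n" "(u, w) \<in> Omega W s" "a \<in> W"
  shows "Prob n (\<lambda>(xs, ys). take (Suc s) xs = u @ [a] \<and> take s ys = w) = J s (u, w) * chain_step p1 Q u a"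
proof -
  have "Prob n (\<lambda>(xs, ys). take (Suc s) xs = u @ [a] \<and> take s ys = w)
      = (\<Sum>y\<in>W. Prob n (\<lambda>(xs, ys). take (Suc s) xs = u @ [a] \<and> ys ! s = y \<and> take s ys = w))"
  proof -
    have "(\<Sum>y\<in>W. Prob n (\<lambda>(xs, ys). take (Suc s) xs = u @ [a] \<and> ys ! s = y \<and> take s ys = w))
      = (\<Sum>y\<in>W. Prob n (\<lambda>\<omega>. (\<lambda>(xs, ys). take (Suc s) xs = u @ [a] \<and> take s ys = w) \<omega> \<and> snd \<omega> ! s = y))"
      by (intro sum.cong refl Pr_cong) auto
    also have "\<dots> = Prob n (\<lambda>(xs, ys). take (Suc s) xs = u @ [a] \<and> take s ys = w)"
      using assms(1) by (intro sum_Prob_release) simp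
    finally show ?thesis ..
  qed
  also have "\<dots> = J s (u, w) * chain_step p1 Q u a * (\<Sum>y\<in>W. q (Suc s) (u @ [a]) w y)"
    by (simp add: Prob_take_Suc_release[OF assms] sum_distrib_left)
  also have "\<dots> = J s (u, w) * chain_step p1 Q u a"
    using assms(2,3) by (simp add: sum_policy Omega_def snoc_in_lists_n_Suc)
  finally show ?thesis .
qed

lemma Prob_take_Suc:
  assumes "Suc s \<le> n" "u \<in> lists_n W s" "a \<in> W"
  shows "Prob n (\<lambda>(xs, ys). take (Suc s) xs = u @ [a]) = Prob n (\<lambda>(xs, ys). take s xs = u) * chain_step p1 Q u a"
proof -
  have by_history: "Prob n (\<lambda>(xs, ys). P xs)
      = (\<Sum>w\<in>lists_n W s. Prob n (\<lambda>(xs, ys). P xs \<and> take s ys = w))" for P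
  proof -
    have "(\<Sum>w\<in>lists_n W s. Prob n (\<lambda>(xs, ys). P xs \<and> take s ys = w))
        = (\<Sum>w\<in>lists_n W s. Prob n (\<lambda>\<omega>. (\<lambda>(xs, ys). P xs) \<omega> \<and> take s (snd \<omega>) = w))"
      by (intro sum.cong refl Pr_cong) auto
    also have "\<dots> = Prob n (\<lambda>(xs, ys). P xs)"
      using assms(1) by (intro sum_Prob_history) simp
    finally show ?thesis ..
  qed
  have uw: "(u, w) \<in> Omega W s" if "w \<in> lists_n W s" for w
    using assms(2) that by (simp add: Omega_def)
  have "Prob n (\<lambda>(xs, ys). take s xs = u)
      = (\<Sum>w\<in>lists_n W s. Prob n (\<lambda>(xs, ys). take s xs = u \<and> take s ys = w))"
    by (rule by_history[of "\<lambda>xs. take s xs = u"])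
  also have "\<dots> = (\<Sum>w\<in>lists_n W s. J s (u, w))"
    using assms(1) by (intro sum.cong refl Prob_take_eq_joint uw) auto
  finally have marginal: "Prob n (\<lambda>(xs, ys). take s xs = u) = (\<Sum>w\<in>lists_n W s. J s (u, w))" .
  have "Prob n (\<lambda>(xs, ys). take (Suc s) xs = u @ [a])
      = (\<Sum>w\<in>lists_n W s. Prob n (\<lambda>(xs, ys). take (Suc s) xs = u @ [a] \<and> take s ys = w))"
    by (rule by_history[of "\<lambda>xs. take (Suc s) xs = u @ [a]"])
  also have "\<dots> = (\<Sum>w\<in>lists_n W s. J s (u, w) * chain_step p1 Q u a)"
    using assms by (intro sum.cong refl Prob_take_Suc_pre_release uw) auto
  finally show ?thesis
    unfolding marginal sum_distrib_right .
qed

lemma Prob_release_eq_policy: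
  assumes "Suc s \<le> n" "u \<in> lists_n W (Suc s)" "y \<in> W" "w \<in> lists_n W s"
  shows "Prob n (\<lambda>(xs, ys). take (Suc s) xs = u \<and> ys ! s = y \<and> take s ys = w)
    = Prob n (\<lambda>(xs, ys). take (Suc s) xs = u \<and> take s ys = w) * q (Suc s) u w y"
proof -
  obtain u' a where u: "u = u' @ [a]" "u' \<in> lists_n W s" "a \<in> W"
    using assms(2) unfolding lists_n_Suc by auto
  then have "(u', w) \<in> Omega W s"
    using assms(4) unfolding Omega_def by simp
  then show ?thesis
    unfolding u(1) using assms u(3)
    by (simp only: Prob_take_Suc_release Prob_take_Suc_pre_release)
qed

end

section \<open>Simplified policies\<close>

abbreviation history_at :: "nat \<Rightarrow> 'a list \<times> 'a list \<Rightarrow> 'a list" where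
  "history_at t \<equiv> \<lambda>(xs, ys). take t xs"

abbreviation state_at :: "nat \<Rightarrow> 'a list \<times> 'a list \<Rightarrow> 'a \<times> 'a option" where
  "state_at t \<equiv> \<lambda>(xs, ys). (xs ! (t - 1), prev (take t xs))"

abbreviation release_at :: "nat \<Rightarrow> 'a list \<times> 'a list \<Rightarrow> 'a" where
  "release_at t \<equiv> \<lambda>(xs, ys). ys ! (t - 1)"

abbreviation releases_before :: "nat \<Rightarrow> 'a list \<times> 'a list \<Rightarrow> 'a list" where
  "releases_before t \<equiv> \<lambda>(xs, ys). take (t - 1) ys"

abbreviation state_releases_at :: "nat \<Rightarrow> 'a list \<times> 'a list \<Rightarrow> 'a \<times> 'a option \<times> 'a list" where
  "state_releases_at t \<equiv> \<lambda>(xs, ys). (xs ! (t - 1), prev (take t xs), take t ys)"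

lemma state_at_eq_last_prev:
  assumes "t \<in> {1..n}" "(xs, ys) \<in> Omega W n"
  shows "state_at t (xs, ys) = (last (take t xs), prev (take t xs))"
  using assms by (cases t) (auto simp: Omega_def lists_n_def last_take_Suc)

lemma images_Omega:
  assumes "Suc s \<le> n"
  shows "history_at (Suc s) ` Omega W n \<subseteq> lists_n W (Suc s)" "release_at (Suc s) ` Omega W n \<subseteq> W"
    "releases_before (Suc s) ` Omega W n \<subseteq> lists_n W s"
  using assms unfolding Omega_def lists_n_def by (auto dest: in_set_takeD)

locale simplified_policy = markov_policy W p1 Q "\<lambda>t xs ys y. qs t (last xs) (prev xs) ys y"
  for W :: "'a set" and p1 Q and qs :: "nat \<Rightarrow> 'a \<Rightarrow> 'a option \<Rightarrow> 'a list \<Rightarrow> 'a \<Rightarrow> real"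
begin

lemma Prob_release_given_history:
  assumes "t \<in> {1..n}" "u \<in> history_at t ` Omega W n" "y \<in> release_at t ` Omega W n"
    "w \<in> releases_before t ` Omega W n"
  shows "Prob n (\<lambda>\<omega>. history_at t \<omega> = u \<and> release_at t \<omega> = y \<and> releases_before t \<omega> = w)
    = Prob n (\<lambda>\<omega>. history_at t \<omega> = u \<and> releases_before t \<omega> = w) * qs t (last u) (prev u) w y"
proof -
  obtain s where t: "t = Suc s" "Suc s \<le> n"
    using assms(1) by (cases t) auto
  have "u \<in> lists_n W (Suc s)" "y \<in> W" "w \<in> lists_n W s"
    using subsetD[OF images_Omega(1)[OF t(2)]] subsetD[OF images_Omega(2)[OF t(2)]]
      subsetD[OF images_Omega(3)[OF t(2)]] assms(2-4)
    unfolding t(1) by simp_all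
  note factor = Prob_release_eq_policy[OF t(2) this]
  have "Prob n (\<lambda>\<omega>. history_at t \<omega> = u \<and> release_at t \<omega> = y \<and> releases_before t \<omega> = w)
      = Prob n (\<lambda>(xs, ys). take (Suc s) xs = u \<and> ys ! s = y \<and> take s ys = w)"
    "Prob n (\<lambda>\<omega>. history_at t \<omega> = u \<and> releases_before t \<omega> = w)
      = Prob n (\<lambda>(xs, ys). take (Suc s) xs = u \<and> take s ys = w)"
    unfolding t(1) by (auto intro!: Pr_cong)
  with factor show ?thesis
    unfolding t(1) by simp
qed

lemma Prob_release_given_state:
  assumes "t \<in> {1..n}" "y \<in> release_at t ` Omega W n" "w \<in> releases_before t ` Omega W n"
  shows "Prob n (\<lambda>\<omega>. state_at t \<omega> = (a, b) \<and> release_at t \<omega> = y \<and> releases_before t \<omega> = w)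
    = Prob n (\<lambda>\<omega>. state_at t \<omega> = (a, b) \<and> releases_before t \<omega> = w) * qs t a b w y"
proof -
  let ?f = "\<lambda>u. (last u, prev u)" and ?\<kappa> = "\<lambda>(a, b) y w. qs t a b w y"
  have state: "state_at t \<omega> = ?f (history_at t \<omega>)" if "\<omega> \<in> Omega W n" for \<omega>
    using state_at_eq_last_prev[OF assms(1)] that by (cases \<omega>) simp
  have "Prob n (\<lambda>\<omega>. ?f (history_at t \<omega>) = (a, b) \<and> release_at t \<omega> = y \<and> releases_before t \<omega> = w)
      = Prob n (\<lambda>\<omega>. ?f (history_at t \<omega>) = (a, b) \<and> releases_before t \<omega> = w) * ?\<kappa> (a, b) y w"
    by (rule Pr_comp_factor[where A="history_at t" and f="?f" and \<kappa>="?\<kappa>", OF finite_Omega _ assms(2,3)])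
      (subst Prob_release_given_history[OF assms(1)], simp_all)
  then show ?thesis
    using state by (simp cong: Pr_cong)
qed

lemma cmi_history_eq_cmi_state:
  assumes "t \<in> {1..n}"
  shows "cmi (Omega W n) (J n) (history_at t) (release_at t) (releases_before t)
    = cmi (Omega W n) (J n) (state_at t) (release_at t) (releases_before t)"
proof -
  let ?f = "\<lambda>u. (last u, prev u)" and ?\<kappa> = "\<lambda>(a, b) y w. qs t a b w y"
  have "cmi (Omega W n) (J n) (state_at t) (release_at t) (releases_before t)
      = cmi (Omega W n) (J n) (\<lambda>\<omega>. ?f (history_at t \<omega>)) (release_at t) (releases_before t)"
    by (rule cmi_cong) (use state_at_eq_last_prev[OF assms] in auto)
  also have "\<dots> = cmi (Omega W n) (J n) (history_at t) (release_at t) (releases_before t)"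
  proof (rule cmi_comp_eq_if_factor[where \<kappa>="?\<kappa>"])
    fix u y w
    assume "u \<in> history_at t ` Omega W n" "y \<in> release_at t ` Omega W n" "w \<in> releases_before t ` Omega W n"
    from Prob_release_given_history[OF assms this] show "Prob n (\<lambda>\<omega>. history_at t \<omega> = u \<and> release_at t \<omega> = y \<and> releases_before t \<omega> = w)
      = Prob n (\<lambda>\<omega>. history_at t \<omega> = u \<and> releases_before t \<omega> = w) * ?\<kappa> (?f u) y w"
      by simp
  qed (simp_all add: finite_Omega joint_nonneg)
  finally show ?thesis ..
qed

end

section \<open>The state policy of a history-dependent policy\<close>

lemma sum_sum_delta:
  assumes "finite W" "a \<in> W" "b \<in> W"
  shows "(\<Sum>x\<in>W. \<Sum>y\<in>W. if x = a \<and> y = b \<and> P then G x y else 0) = (if P then G a b else 0)"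
proof -
  have "(\<Sum>y\<in>W. if x = a \<and> y = b \<and> P then G x y else 0) = (if x = a \<and> P then G x b else 0)" for x
    using assms by (cases "x = a \<and> P") (auto simp: sum.delta)
  then show ?thesis
    using assms by (simp add: sum.delta)
qed

context markov_policy
begin

lemma Prob_Suc_snoc:
  assumes "a \<in> W" "y0 \<in> W"
    and "\<And>xs ys x y. (xs, ys) \<in> Omega W s \<Longrightarrow> x \<in> W \<Longrightarrow> y \<in> W \<Longrightarrow>
      E (xs @ [x], ys @ [y]) = (x = a \<and> y = y0 \<and> E0 xs ys)"
  shows "Prob (Suc s) E = (\<Sum>(xs, ys)\<in>Omega W s.
    if E0 xs ys then J s (xs, ys) * chain_step p1 Q xs a * q (Suc s) (xs @ [a]) ys y0 else 0)"
  unfolding Prob_Suc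
proof (rule sum.cong[OF refl], clarify)
  fix xs ys
  assume "(xs, ys) \<in> Omega W s"
  then have "(\<Sum>x\<in>W. \<Sum>y\<in>W. if E (xs @ [x], ys @ [y]) then J s (xs, ys) * chain_step p1 Q xs x * q (Suc s) (xs @ [x]) ys y else 0)
     = (\<Sum>x\<in>W. \<Sum>y\<in>W. if x = a \<and> y = y0 \<and> E0 xs ys then J s (xs, ys) * chain_step p1 Q xs x * q (Suc s) (xs @ [x]) ys y else 0)"
    by (intro sum.cong refl) (simp add: assms(3))
  then show "(\<Sum>x\<in>W. \<Sum>y\<in>W. if E (xs @ [x], ys @ [y]) then J s (xs, ys) * chain_step p1 Q xs x * q (Suc s) (xs @ [x]) ys y else 0)
     = (if E0 xs ys then J s (xs, ys) * chain_step p1 Q xs a * q (Suc s) (xs @ [a]) ys y0 else 0)"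
    by (simp only: sum_sum_delta[OF finite_W assms(1,2)])
qed

definition state_law :: "nat \<Rightarrow> 'a \<Rightarrow> 'a option \<Rightarrow> 'a list \<Rightarrow> real" where
  "state_law t a b v = Prob t (\<lambda>(xs, ys). last xs = a \<and> prev xs = b \<and> ys = v)"

text \<open>\<open>pre_release_law s a b w\<close> is the probability that \<open>X\<^sub>s\<^sub>+\<^sub>1 = a\<close>, that the previous location
  is \<open>b\<close> (\<open>None\<close> if \<open>s = 0\<close>) and that \<open>Y\<^sup>s = w\<close>, before \<open>Y\<^sub>s\<^sub>+\<^sub>1\<close> is released.\<close>

definition pre_release_law :: "nat \<Rightarrow> 'a \<Rightarrow> 'a option \<Rightarrow> 'a list \<Rightarrow> real" where
  "pre_release_law s a b w = (\<Sum>(xs, ys)\<in>Omega W s.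
    if prev (xs @ [a]) = b \<and> ys = w then J s (xs, ys) * chain_step p1 Q xs a else 0)"

lemma state_law_nonneg: "state_law t a b v \<ge> 0"
  unfolding state_law_def by (rule Pr_nonneg) (rule joint_nonneg)

lemma state_law_snoc:
  assumes "a \<in> W" "y \<in> W"
  shows "state_law (Suc s) a b (w @ [y]) = (\<Sum>(xs, ys)\<in>Omega W s.
    if prev (xs @ [a]) = b \<and> ys = w then J s (xs, ys) * chain_step p1 Q xs a * q (Suc s) (xs @ [a]) ys y else 0)"
  unfolding state_law_def by (rule Prob_Suc_snoc[OF assms]) auto

lemma sum_state_law_snoc:
  assumes "a \<in> W"
  shows "(\<Sum>y\<in>W. state_law (Suc s) a b (w @ [y])) = pre_release_law s a b w"
proof -
  have "(\<Sum>y\<in>W. state_law (Suc s) a b (w @ [y])) = (\<Sum>y\<in>W. \<Sum>(xs, ys)\<in>Omega W s.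
      if prev (xs @ [a]) = b \<and> ys = w then J s (xs, ys) * chain_step p1 Q xs a * q (Suc s) (xs @ [a]) ys y else 0)"
    by (rule sum.cong[OF refl]) (simp add: state_law_snoc assms)
  also have "\<dots> = (\<Sum>(xs, ys)\<in>Omega W s. \<Sum>y\<in>W.
      if prev (xs @ [a]) = b \<and> ys = w then J s (xs, ys) * chain_step p1 Q xs a * q (Suc s) (xs @ [a]) ys y else 0)"
    unfolding split_def by (rule sum.swap)
  also have "\<dots> = pre_release_law s a b w"
    unfolding pre_release_law_def
  proof (rule sum.cong[OF refl], clarify)
    fix xs ys
    assume "(xs, ys) \<in> Omega W s"
    then have sum_q: "(\<Sum>y\<in>W. q (Suc s) (xs @ [a]) ys y) = 1"
      using assms unfolding Omega_def by (simp add: sum_policy snoc_in_lists_n_Suc)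
    show "(\<Sum>y\<in>W. if prev (xs @ [a]) = b \<and> ys = w then J s (xs, ys) * chain_step p1 Q xs a * q (Suc s) (xs @ [a]) ys y else 0)
        = (if prev (xs @ [a]) = b \<and> ys = w then J s (xs, ys) * chain_step p1 Q xs a else 0)"
    proof (cases "prev (xs @ [a]) = b \<and> ys = w")
      case True
      show ?thesis
        by (simp only: if_P[OF True] sum_distrib_left[symmetric] sum_q mult_1_right)
    next
      case False
      show ?thesis
        by (simp only: if_not_P[OF False] sum.neutral_const)
    qed
  qed
  finally show ?thesis .
qed

lemma state_law_eq_0:
  assumes "\<not> (a \<in> W \<and> v \<in> lists_n W (Suc s))"
  shows "state_law (Suc s) a b v = 0"
  unfolding state_law_def
proof (rule Pr_eq_0)
  fix \<omega>
  assume \<omega>: "\<omega> \<in> Omega W (Suc s)"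
  obtain xs ys where xs_ys: "\<omega> = (xs, ys)"
    by fastforce
  have "xs \<noteq> []" "set xs \<subseteq> W" "ys \<in> lists_n W (Suc s)"
    using \<omega> xs_ys unfolding Omega_def lists_n_def by auto
  then have "last xs \<in> W"
    using last_in_set[of xs] by blast
  then show "\<not> (case \<omega> of (xs, ys) \<Rightarrow> last xs = a \<and> prev xs = b \<and> ys = v)"
    using assms xs_ys \<open>ys \<in> lists_n W (Suc s)\<close> by auto
qed

lemma pre_release_law_0: "pre_release_law 0 a b w = (if b = None \<and> w = [] then p1 a else 0)"
  unfolding pre_release_law_def Omega_0 by (simp add: prev_snoc joint_def chain_step_def)

lemma pre_release_law_Suc:
  "pre_release_law (Suc s) a b w = (case b of None \<Rightarrow> 0
    | Some c \<Rightarrow> Q c a * (\<Sum>b'\<in>(\<lambda>(xs, ys). prev xs) ` Omega W (Suc s). state_law (Suc s) c b' w))"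
proof (cases b)
  case None
  have "xs \<noteq> []" if "(xs, ys) \<in> Omega W (Suc s)" for xs ys
    using that unfolding Omega_def lists_n_def by auto
  then show ?thesis
    unfolding pre_release_law_def None by (auto simp: prev_snoc intro!: sum.neutral)
next
  case (Some c)
  have "pre_release_law (Suc s) a (Some c) w
      = (\<Sum>(xs, ys)\<in>Omega W (Suc s). if last xs = c \<and> ys = w then J (Suc s) (xs, ys) else 0) * Q c a"
    unfolding pre_release_law_def sum_distrib_right
  proof (rule sum.cong[OF refl], clarify)
    fix xs ys
    assume "(xs, ys) \<in> Omega W (Suc s)"
    then have "xs \<noteq> []"
      unfolding Omega_def lists_n_def by auto
    then show "(if prev (xs @ [a]) = Some c \<and> ys = w then J (Suc s) (xs, ys) * chain_step p1 Q xs a else 0)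
        = (if last xs = c \<and> ys = w then J (Suc s) (xs, ys) else 0) * Q c a"
      by (simp add: prev_snoc chain_step_def)
  qed
  also have "(\<Sum>(xs, ys)\<in>Omega W (Suc s). if last xs = c \<and> ys = w then J (Suc s) (xs, ys) else 0)
      = Prob (Suc s) (\<lambda>(xs, ys). last xs = c \<and> ys = w)"
    unfolding Pr_eq_sum_if[OF finite_Omega] by (rule sum.cong[OF refl]) (auto split: prod.splits)
  also have "\<dots> = (\<Sum>b'\<in>(\<lambda>(xs, ys). prev xs) ` Omega W (Suc s).
      Prob (Suc s) (\<lambda>\<omega>. (\<lambda>(xs, ys). last xs = c \<and> ys = w) \<omega> \<and> (\<lambda>(xs, ys). prev xs) \<omega> = b'))"
    by (rule sum_Pr_partition_image[OF finite_Omega, symmetric])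
  also have "\<dots> = (\<Sum>b'\<in>(\<lambda>(xs, ys). prev xs) ` Omega W (Suc s). state_law (Suc s) c b' w)"
    unfolding state_law_def by (intro sum.cong refl Pr_cong) auto
  finally show ?thesis
    using Some by simp
qed

text \<open>The conditional law of the release \<open>Y\<^sub>t\<close> given \<open>(X\<^sub>t, X\<^sub>t\<^sub>-\<^sub>1, Y\<^sup>t\<^sup>-\<^sup>1)\<close> under \<open>q\<close>;
  where that condition has probability zero the choice is irrelevant and we release uniformly.\<close>

definition state_kernel :: "nat \<Rightarrow> 'a \<Rightarrow> 'a option \<Rightarrow> 'a list \<Rightarrow> 'a \<Rightarrow> real" where
  "state_kernel t a b w y = (let mass = \<Sum>y'\<in>W. state_law t a b (w @ [y'])
     in if mass > 0 then state_law t a b (w @ [y]) / mass else 1 / real (card W))"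

lemma state_kernel_nonneg: "state_kernel t a b w y \<ge> 0"
  unfolding state_kernel_def Let_def using state_law_nonneg by (auto intro!: divide_nonneg_pos)

lemma sum_state_kernel:
  assumes "W \<noteq> {}"
  shows "(\<Sum>y\<in>W. state_kernel t a b w y) = 1"
proof (cases "(\<Sum>y'\<in>W. state_law t a b (w @ [y'])) > 0")
  case True
  then show ?thesis
    unfolding state_kernel_def Let_def by (simp add: sum_divide_distrib[symmetric])
next
  case False
  have "card W > 0"
    using assms finite_W by (simp add: card_gt_0_iff)
  then show ?thesis
    using False unfolding state_kernel_def Let_def by simp
qed

lemma state_policy_QH: "(\<lambda>t xs ys y. state_kernel t (last xs) (prev xs) ys y) \<in> QH W"
  unfolding QH_def
proof (clarify, intro conjI ballI)
  fix t xs ys y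
  show "0 \<le> state_kernel t (last xs) (prev xs) ys y"
    by (rule state_kernel_nonneg)
next
  fix t xs ys
  assume "1 \<le> t" "xs \<in> lists_n W t"
  then have "W \<noteq> {}"
    unfolding lists_n_def by (cases xs) auto
  then show "(\<Sum>y\<in>W. state_kernel t (last xs) (prev xs) ys y) = 1"
    by (rule sum_state_kernel)
qed

lemma state_policy_QS: "(\<lambda>t xs ys y. state_kernel t (last xs) (prev xs) ys y) \<in> QS W"
  unfolding QS_def using state_policy_QH by auto

interpretation state: simplified_policy W p1 Q state_kernel
  using finite_W markov state_policy_QH by unfold_locales

lemma state_law_state_policy_Suc:
  assumes pre: "\<And>a b w. state.pre_release_law s a b w = pre_release_law s a b w"
  shows "state.state_law (Suc s) a b v = state_law (Suc s) a b v"
proof (cases "a \<in> W \<and> v \<in> lists_n W (Suc s)")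
  case False
  then show ?thesis
    by (simp add: state.state_law_eq_0 state_law_eq_0)
next
  case True
  then obtain w y where v: "v = w @ [y]" "y \<in> W" and a: "a \<in> W"
    unfolding lists_n_Suc by auto
  have "state.state_law (Suc s) a b (w @ [y]) = state.pre_release_law s a b w * state_kernel (Suc s) a b w y"
    unfolding state.state_law_snoc[OF a v(2)] state.pre_release_law_def sum_distrib_right
    by (intro sum.cong refl) (auto simp: prev_snoc)
  also have "\<dots> = pre_release_law s a b w * state_kernel (Suc s) a b w y"
    by (simp add: pre)
  also have "\<dots> = state_law (Suc s) a b (w @ [y])"
  proof -
    let ?mass = "\<Sum>y'\<in>W. state_law (Suc s) a b (w @ [y'])"
    have mass: "?mass = pre_release_law s a b w"
      by (rule sum_state_law_snoc[OF a])
    show ?thesis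
    proof (cases "?mass > 0")
      case True
      then show ?thesis
        unfolding state_kernel_def Let_def mass[symmetric] by simp
    next
      case False
      then have "?mass = 0"
        using sum_nonneg[of W "\<lambda>y'. state_law (Suc s) a b (w @ [y'])"] state_law_nonneg by force
      moreover have "state_law (Suc s) a b (w @ [y]) \<le> ?mass"
        by (rule member_le_sum) (use v finite_W state_law_nonneg in auto)
      ultimately show ?thesis
        using mass state_law_nonneg[of "Suc s" a b "w @ [y]"] by simp
    qed
  qed
  finally show ?thesis
    using v by simp
qed

lemma state_law_state_policy: "state.state_law (Suc s) a b v = state_law (Suc s) a b v"
proof (induction s arbitrary: a b v)
  case 0
  show ?case
    by (rule state_law_state_policy_Suc) (simp add: state.pre_release_law_0 pre_release_law_0)
next
  case (Suc s)
  show ?case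
    by (rule state_law_state_policy_Suc)
      (simp add: state.pre_release_law_Suc pre_release_law_Suc Suc.IH split: option.splits)
qed

lemma Prob_state_releases_state_policy:
  assumes "t \<in> {1..n}"
  shows "state.Prob n (\<lambda>\<omega>. state_releases_at t \<omega> = z) = Prob n (\<lambda>\<omega>. state_releases_at t \<omega> = z)"
proof -
  obtain a b v where z: "z = (a, b, v)"
    by (cases z) auto
  obtain s where t: "t = Suc s"
    using assms by (cases t) auto
  let ?E = "\<lambda>(xs, ys). last xs = a \<and> prev xs = b \<and> ys = v"
  have event: "(\<lambda>\<omega>. state_releases_at t \<omega> = z) (xs, ys) = ?E (take t xs, take t ys)"
    if "(xs, ys) \<in> Omega W n" for xs ys
    using state_at_eq_last_prev[OF assms that] z by simp
  have "state.Prob n (\<lambda>\<omega>. state_releases_at t \<omega> = z) = state.state_law t a b v"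
    unfolding state.state_law_def using assms by (intro state.Prob_take event) auto
  also have "\<dots> = state_law t a b v"
    unfolding t by (rule state_law_state_policy)
  also have "\<dots> = Prob n (\<lambda>\<omega>. state_releases_at t \<omega> = z)"
    unfolding state_law_def using assms by (intro Prob_take[symmetric] event) auto
  finally show ?thesis .
qed

lemma dist_avg_state_policy:
  "dist_avg W p1 Q (\<lambda>t xs ys y. state_kernel t (last xs) (prev xs) ys y) d n = dist_avg W p1 Q q d n"
proof -
  have "(\<Sum>\<omega>\<in>Omega W n. state.J n \<omega> * d (fst \<omega> ! (t - 1)) (snd \<omega> ! (t - 1)))
      = (\<Sum>\<omega>\<in>Omega W n. J n \<omega> * d (fst \<omega> ! (t - 1)) (snd \<omega> ! (t - 1)))" if t: "t \<in> {1..n}" for t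
  proof -
    let ?F = "\<lambda>(a, b, v). d a (v ! (t - 1))"
    have "d (fst \<omega> ! (t - 1)) (snd \<omega> ! (t - 1)) = ?F (state_releases_at t \<omega>)" for \<omega>
      using t by (auto simp: split_def)
    then show ?thesis
      using sum_eq_if_same_law[OF finite_Omega Prob_state_releases_state_policy[OF t], of ?F] by simp
  qed
  then show ?thesis
    unfolding dist_avg_eq_sum_expectations by simp
qed

lemma cmi_state_policy_le:
  assumes "t \<in> {1..n}"
  shows "cmi (Omega W n) (state.J n) (history_at t) (release_at t) (releases_before t)
    \<le> cmi (Omega W n) (J n) (history_at t) (release_at t) (releases_before t)"
proof -
  have "cmi (Omega W n) (state.J n) (history_at t) (release_at t) (releases_before t)
      = cmi (Omega W n) (state.J n) (state_at t) (release_at t) (releases_before t)"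
    by (rule state.cmi_history_eq_cmi_state[OF assms])
  also have "\<dots> = cmi (Omega W n) (J n) (state_at t) (release_at t) (releases_before t)"
    by (rule cmi_eq_if_same_law[OF finite_Omega Prob_state_releases_state_policy[OF assms],
          where A'="\<lambda>(a, b, v). (a, b)" and B'="\<lambda>(a, b, v). v ! (t - 1)" and C'="\<lambda>(a, b, v). take (t - 1) v"])
      (use assms in \<open>auto simp: min_def\<close>)
  also have "\<dots> = cmi (Omega W n) (J n) (\<lambda>\<omega>. (\<lambda>u. (last u, prev u)) (history_at t \<omega>)) (release_at t) (releases_before t)"
    by (rule cmi_cong) (use state_at_eq_last_prev[OF assms] in auto)
  also have "\<dots> \<le> cmi (Omega W n) (J n) (history_at t) (release_at t) (releases_before t)"
    using finite_Omega joint_nonneg by (rule cmi_comp_le)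
  finally show ?thesis .
qed

lemma leak_avg_state_policy_le:
  "leak_avg W p1 Q (\<lambda>t xs ys y. state_kernel t (last xs) (prev xs) ys y) n \<le> leak_avg W p1 Q q n"
  unfolding leak_avg_def by (intro mult_left_mono sum_mono cmi_state_policy_le) auto

end

theorem INF_QH_eq_INF_QS:
  assumes "finite W" "markov_chain W p1 Q"
  shows "(INF q\<in>{q \<in> QH W. feasible W p1 Q d Dbar q}. objective W p1 Q q)
    = (INF q\<in>{q \<in> QS W. feasible W p1 Q d Dbar q}. objective W p1 Q q)"
proof (rule antisym)
  show "(INF q\<in>{q \<in> QH W. feasible W p1 Q d Dbar q}. objective W p1 Q q)
      \<le> (INF q\<in>{q \<in> QS W. feasible W p1 Q d Dbar q}. objective W p1 Q q)"
    by (rule INF_superset_mono) (auto simp: QS_def)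
  show "(INF q\<in>{q \<in> QS W. feasible W p1 Q d Dbar q}. objective W p1 Q q)
      \<le> (INF q\<in>{q \<in> QH W. feasible W p1 Q d Dbar q}. objective W p1 Q q)"
  proof (rule INF_mono)
    fix q
    assume q: "q \<in> {q \<in> QH W. feasible W p1 Q d Dbar q}"
    interpret markov_policy W p1 Q q
      using assms q by unfold_locales auto
    let ?q' = "\<lambda>t xs ys y. state_kernel t (last xs) (prev xs) ys y"
    have "?q' \<in> {q \<in> QS W. feasible W p1 Q d Dbar q}"
      using state_policy_QS q unfolding feasible_def by (simp add: dist_avg_state_policy)
    moreover have "objective W p1 Q ?q' \<le> objective W p1 Q q"
      unfolding objective_def by (rule Limsup_mono) (simp add: leak_avg_state_policy_le)
    ultimately show "\<exists>q'\<in>{q \<in> QS W. feasible W p1 Q d Dbar q}. objective W p1 Q q' \<le> objective W p1 Q q"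
      by blast
  qed
qed

section \<open>The chain rule for simplified policies\<close>

lemma ln_ratio_telescope:
  fixes a0 a1 b0 b1 c0 c1 k r :: real
  assumes "a0 > 0" "a1 > 0" "b0 > 0" "b1 > 0" "c0 > 0" "c1 > 0"
    and "a1 = a0 * r * k" "b1 = b0 * r"
  shows "ln (k * c0 / c1) = (ln a1 - ln b1 - ln c1) - (ln a0 - ln b0 - ln c0)"
proof -
  have "r > 0"
    using assms(3,4,8) by (simp add: zero_less_mult_iff)
  moreover have "k > 0"
    using assms(1,2,7) \<open>r > 0\<close> by (metis mult_pos_pos zero_less_mult_pos)
  ultimately have "ln a1 = ln a0 + ln r + ln k" "ln b1 = ln b0 + ln r" "ln (k * c0 / c1) = ln k + ln c0 - ln c1"
    using assms by (simp_all add: ln_mult_pos ln_div)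
  then show ?thesis
    by linarith
qed

context markov_policy
begin

definition history_prefix_prob :: "nat \<Rightarrow> 'a list \<Rightarrow> nat \<Rightarrow> real" where
  "history_prefix_prob n xs0 i = Prob n (\<lambda>(xs, ys). take i xs = take i xs0)"

definition releases_prefix_prob :: "nat \<Rightarrow> 'a list \<Rightarrow> nat \<Rightarrow> real" where
  "releases_prefix_prob n ys0 i = Prob n (\<lambda>(xs, ys). take i ys = take i ys0)"

definition prefix_info_density :: "nat \<Rightarrow> 'a list \<times> 'a list \<Rightarrow> nat \<Rightarrow> real" where
  "prefix_info_density n \<omega>0 i = ln (J i (take i (fst \<omega>0), take i (snd \<omega>0)))
     - ln (history_prefix_prob n (fst \<omega>0) i) - ln (releases_prefix_prob n (snd \<omega>0) i)"

lemma joint_take_eq_Prob: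
  assumes "i \<le> n" "(xs0, ys0) \<in> Omega W n"
  shows "J i (take i xs0, take i ys0) = Prob n (\<lambda>(xs, ys). take i xs = take i xs0 \<and> take i ys = take i ys0)"
  using Prob_take_eq_joint[OF assms(1) Omega_take[OF assms]] by simp

lemma prefix_probs_pos:
  assumes "i \<le> n" "(xs0, ys0) \<in> Omega W n" "J n (xs0, ys0) > 0"
  shows "J i (take i xs0, take i ys0) > 0" "history_prefix_prob n xs0 i > 0" "releases_prefix_prob n ys0 i > 0"
  unfolding joint_take_eq_Prob[OF assms(1,2)] history_prefix_prob_def releases_prefix_prob_def
  by (rule Pr_pos[where pm="J n", OF finite_Omega joint_nonneg assms(2,3)]; simp)+

lemma prefix_info_density_0: "prefix_info_density n \<omega>0 0 = 0"
proof -
  have "history_prefix_prob n (fst \<omega>0) 0 = Prob n (\<lambda>_. True)"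
    "releases_prefix_prob n (snd \<omega>0) 0 = Prob n (\<lambda>_. True)"
    unfolding history_prefix_prob_def releases_prefix_prob_def by (auto intro: Pr_cong)
  moreover have "J 0 ([], []) = 1"
    by (simp add: joint_def)
  ultimately show ?thesis
    unfolding prefix_info_density_def by (simp add: Prob_True)
qed

lemma history_prefix_prob_Suc:
  assumes "Suc s \<le> n" "(xs0, ys0) \<in> Omega W n"
  shows "history_prefix_prob n xs0 (Suc s) = history_prefix_prob n xs0 s * chain_step p1 Q (take s xs0) (xs0 ! s)"
proof -
  have "take (Suc s) xs0 = take s xs0 @ [xs0 ! s]" "take s xs0 \<in> lists_n W s" "xs0 ! s \<in> W"
    using assms Omega_take[of s n xs0 ys0] Omega_nth[of s n xs0 ys0]
    by (auto simp: take_Suc_conv_app_nth Omega_def lists_n_def)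
  then show ?thesis
    unfolding history_prefix_prob_def using Prob_take_Suc[OF assms(1)] by simp
qed

lemma prev_take_mem:
  assumes "t \<in> {1..n}" "(xs, ys) \<in> Omega W n"
  shows "prev (take t xs) \<in> (if t = 1 then {None} else Some ` W)"
proof -
  obtain s where s: "t = Suc s" "s < length xs" "set xs \<subseteq> W"
    using assms by (cases t) (auto simp: Omega_def lists_n_def)
  then have "take t xs = take s xs @ [xs ! s]"
    by (simp add: take_Suc_conv_app_nth)
  moreover have "take s xs \<noteq> [] \<Longrightarrow> last (take s xs) \<in> W"
    using s(3) by (meson in_set_takeD last_in_set subsetD)
  ultimately show ?thesis
    using s(1,2) by (auto simp: prev_snoc)
qed

lemma mi_density:
  assumes "\<omega>0 \<in> Omega W n" "J n \<omega>0 > 0"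
  shows "cmi_density (Omega W n) (J n) (\<lambda>(xs, ys). xs) (\<lambda>(xs, ys). ys) (\<lambda>_. ()) \<omega>0 = prefix_info_density n \<omega>0 n"
proof -
  obtain xs0 ys0 where \<omega>0: "\<omega>0 = (xs0, ys0)"
    by fastforce
  have take_n: "take n xs = xs" "take n ys = ys" if "(xs, ys) \<in> Omega W n" for xs ys
    using that unfolding Omega_def lists_n_def by auto
  have "Prob n (\<lambda>\<omega>. fst \<omega> = xs0 \<and> snd \<omega> = ys0) = J n (take n xs0, take n ys0)"
    "Prob n (\<lambda>\<omega>. fst \<omega> = xs0) = history_prefix_prob n xs0 n"
    "Prob n (\<lambda>\<omega>. snd \<omega> = ys0) = releases_prefix_prob n ys0 n"
    using joint_take_eq_Prob[OF order.refl assms(1)[unfolded \<omega>0]] assms(1)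
    unfolding \<omega>0 history_prefix_prob_def releases_prefix_prob_def
    by (auto intro!: Pr_cong simp: take_n)
  moreover note pos = prefix_probs_pos[OF order.refl assms[unfolded \<omega>0]]
  ultimately show ?thesis
    unfolding cmi_density_def prefix_info_density_def \<omega>0
    by (simp add: split_def Prob_True ln_div ln_mult_pos)
qed

end

context simplified_policy
begin

lemma cmi_density_state:
  assumes t: "t \<in> {1..n}" and \<omega>0: "(xs0, ys0) \<in> Omega W n" "J n (xs0, ys0) > 0"
  shows "cmi_density (Omega W n) (J n) (state_at t) (release_at t) (releases_before t) (xs0, ys0)
    = ln (qs t (xs0 ! (t - 1)) (prev (take t xs0)) (take (t - 1) ys0) (ys0 ! (t - 1))
        * releases_prefix_prob n ys0 (t - 1) / releases_prefix_prob n ys0 t)"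
proof -
  let ?st = "state_at t (xs0, ys0)" and ?y = "ys0 ! (t - 1)" and ?w = "take (t - 1) ys0"
  obtain s where s: "t = Suc s"
    using t by (cases t) auto
  have "Prob n (\<lambda>\<omega>. release_at t \<omega> = ?y \<and> releases_before t \<omega> = ?w)
      = Prob n (\<lambda>(xs, ys). take s ys @ [ys ! s] = take s ys0 @ [ys0 ! s])"
    unfolding s by (intro Pr_cong) auto
  also have "\<dots> = releases_prefix_prob n ys0 t"
    unfolding releases_prefix_prob_def s
    by (rule Pr_cong) (use t \<omega>0(1) s in \<open>auto simp: Omega_def lists_n_def take_Suc_conv_app_nth\<close>)
  finally have rel: "Prob n (\<lambda>\<omega>. release_at t \<omega> = ?y \<and> releases_before t \<omega> = ?w) = releases_prefix_prob n ys0 t" .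
  have before: "Prob n (\<lambda>\<omega>. releases_before t \<omega> = ?w) = releases_prefix_prob n ys0 (t - 1)"
    unfolding releases_prefix_prob_def by (rule Pr_cong) auto
  have factor: "Prob n (\<lambda>\<omega>. state_at t \<omega> = ?st \<and> release_at t \<omega> = ?y \<and> releases_before t \<omega> = ?w)
      = Prob n (\<lambda>\<omega>. state_at t \<omega> = ?st \<and> releases_before t \<omega> = ?w)
        * qs t (xs0 ! (t - 1)) (prev (take t xs0)) ?w ?y"
    using Prob_release_given_state[OF t, of ?y ?w "xs0 ! (t - 1)" "prev (take t xs0)"] \<omega>0(1)
    by (force intro: rev_image_eqI)
  have "Prob n (\<lambda>\<omega>. state_at t \<omega> = ?st \<and> releases_before t \<omega> = ?w) > 0"
    by (rule Pr_pos[where pm="J n", OF finite_Omega joint_nonneg \<omega>0]) auto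
  then show ?thesis
    unfolding cmi_density_def using factor rel before by simp
qed

lemma cmi_density_state_eq_diff:
  assumes t: "t \<in> {1..n}" and \<omega>0: "(xs0, ys0) \<in> Omega W n" "J n (xs0, ys0) > 0"
  shows "cmi_density (Omega W n) (J n) (state_at t) (release_at t) (releases_before t) (xs0, ys0)
    = prefix_info_density n (xs0, ys0) t - prefix_info_density n (xs0, ys0) (t - 1)"
proof -
  obtain s where s: "t = Suc s" "Suc s \<le> n"
    using t by (cases t) auto
  let ?J = "\<lambda>i. J i (take i xs0, take i ys0)"
  let ?step = "chain_step p1 Q (take s xs0) (xs0 ! s)"
  let ?k = "qs (Suc s) (xs0 ! s) (prev (take (Suc s) xs0)) (take s ys0) (ys0 ! s)"
  have len: "s < length xs0" "s < length ys0"
    using s \<omega>0(1) unfolding Omega_def lists_n_def by auto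
  have "?J (Suc s) = ?J s * ?step * ?k"
    using joint_snoc[of "take s xs0" s "take s ys0" p1 Q _ "xs0 ! s" "ys0 ! s"] len
    by (simp add: take_Suc_conv_app_nth last_take_Suc)
  moreover have "history_prefix_prob n xs0 (Suc s) = history_prefix_prob n xs0 s * ?step"
    by (rule history_prefix_prob_Suc[OF s(2) \<omega>0(1)])
  ultimately have "ln (?k * releases_prefix_prob n ys0 s / releases_prefix_prob n ys0 (Suc s))
      = prefix_info_density n (xs0, ys0) (Suc s) - prefix_info_density n (xs0, ys0) s"
    unfolding prefix_info_density_def fst_conv snd_conv
    using prefix_probs_pos[OF _ \<omega>0, of s] prefix_probs_pos[OF s(2) \<omega>0] s(2)
    by (intro ln_ratio_telescope) simp_all
  then show ?thesis
    using cmi_density_state[OF t \<omega>0] unfolding s(1) by simp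
qed

lemma mi_eq_sum_cmi_state:
  "mi (Omega W n) (J n) (\<lambda>(xs, ys). xs) (\<lambda>(xs, ys). ys)
    = (\<Sum>t = 1..n. cmi (Omega W n) (J n) (state_at t) (release_at t) (releases_before t))"
proof -
  have telescope: "(\<Sum>t = 1..n. cmi_density (Omega W n) (J n) (state_at t) (release_at t) (releases_before t) \<omega>)
      = cmi_density (Omega W n) (J n) (\<lambda>(xs, ys). xs) (\<lambda>(xs, ys). ys) (\<lambda>_. ()) \<omega>"
    if \<omega>: "\<omega> \<in> Omega W n" "J n \<omega> > 0" for \<omega>
  proof -
    let ?g = "prefix_info_density n \<omega>"
    obtain xs0 ys0 where \<omega>0: "\<omega> = (xs0, ys0)"
      by fastforce
    have "(\<Sum>t = 1..n. cmi_density (Omega W n) (J n) (state_at t) (release_at t) (releases_before t) \<omega>)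
        = (\<Sum>t = 1..n. ?g t - ?g (t - 1))"
      using cmi_density_state_eq_diff \<omega> unfolding \<omega>0 by simp
    also have "\<dots> = ?g n - ?g 0"
      using sum_telescope''[of 0 n ?g] by simp
    finally show ?thesis
      using mi_density[OF \<omega>(1,2)] prefix_info_density_0 by simp
  qed
  have "(\<Sum>t = 1..n. cmi (Omega W n) (J n) (state_at t) (release_at t) (releases_before t))
      = (\<Sum>\<omega>\<in>Omega W n. J n \<omega> * (\<Sum>t = 1..n.
          cmi_density (Omega W n) (J n) (state_at t) (release_at t) (releases_before t) \<omega>))"
    by (simp add: cmi_eq_sum_density[of "Omega W n" "J n", OF finite_Omega joint_nonneg] sum_distrib_left, rule sum.swap)
  also have "\<dots> = (\<Sum>\<omega>\<in>Omega W n. J n \<omega> * cmi_density (Omega W n) (J n) (\<lambda>(xs, ys). xs) (\<lambda>(xs, ys). ys) (\<lambda>_. ()) \<omega>)"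
  proof (rule sum.cong[OF refl])
    fix \<omega>
    assume "\<omega> \<in> Omega W n"
    then show "J n \<omega> * (\<Sum>t = 1..n. cmi_density (Omega W n) (J n) (state_at t) (release_at t) (releases_before t) \<omega>)
      = J n \<omega> * cmi_density (Omega W n) (J n) (\<lambda>(xs, ys). xs) (\<lambda>(xs, ys). ys) (\<lambda>_. ()) \<omega>"
      using joint_nonneg[of \<omega> n] telescope[of \<omega>] by (cases "J n \<omega> > 0") auto
  qed
  also have "\<dots> = mi (Omega W n) (J n) (\<lambda>(xs, ys). xs) (\<lambda>(xs, ys). ys)"
    unfolding mi_def by (rule cmi_eq_sum_density[OF finite_Omega joint_nonneg, symmetric])
  finally show ?thesis ..
qed

lemma cmi_density_state_eq_ln_ratio:
  assumes t: "t \<in> {1..n}" and \<omega>0: "(xs0, ys0) \<in> Omega W n" "J n (xs0, ys0) > 0"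
  shows "cmi_density (Omega W n) (J n) (state_at t) (release_at t) (releases_before t) (xs0, ys0)
    = ln (qs t (xs0 ! (t - 1)) (prev (take t xs0)) (butlast (take t ys0)) (last (take t ys0))
        / (Prob n (\<lambda>(xs, ys). take t ys = take t ys0)
          / Prob n (\<lambda>(xs, ys). take (t - 1) ys = butlast (take t ys0))))"
proof -
  have "t - 1 < length ys0" "t = Suc (t - 1)"
    using t \<omega>0(1) unfolding Omega_def lists_n_def by auto
  then have "butlast (take t ys0) = take (t - 1) ys0" "last (take t ys0) = ys0 ! (t - 1)"
    by (metis butlast_snoc take_Suc_conv_app_nth, metis last_take_Suc)
  then show ?thesis
    unfolding cmi_density_state[OF t \<omega>0] releases_prefix_prob_def by simp
qed

lemma cmi_state_eq_sum:
  assumes t: "t \<in> {1..n}"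
  shows "cmi (Omega W n) (J n) (state_at t) (release_at t) (releases_before t)
    = (\<Sum>yt\<in>lists_n W t. \<Sum>xt\<in>W. \<Sum>xp\<in>(if t = 1 then {None} else Some ` W).
        let m = Prob n (\<lambda>(xs, ys). xs ! (t - 1) = xt \<and> prev (take t xs) = xp \<and> take t ys = yt);
            cond = Prob n (\<lambda>(xs, ys). take t ys = yt) / Prob n (\<lambda>(xs, ys). take (t - 1) ys = butlast yt)
        in if m > 0 then m * ln (qs t xt xp (butlast yt) (last yt) / cond) else 0)"
proof -
  define G where "G = (\<lambda>(xs :: 'a list, ys :: 'a list). (take t ys, xs ! (t - 1), prev (take t xs)))"
  define L where "L = (\<lambda>(yt, xt, xp). ln (qs t xt xp (butlast yt) (last yt)
    / (Prob n (\<lambda>(xs, ys). take t ys = yt) / Prob n (\<lambda>(xs, ys). take (t - 1) ys = butlast yt))))"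
  define T where "T = lists_n W t \<times> W \<times> (if t = 1 then {None} else Some ` W)"
  have Prob_G: "Prob n (\<lambda>\<omega>. G \<omega> = (yt, xt, xp))
      = Prob n (\<lambda>(xs, ys). xs ! (t - 1) = xt \<and> prev (take t xs) = xp \<and> take t ys = yt)" for yt xt xp
    unfolding G_def by (rule Pr_cong) auto
  have "(\<Sum>yt\<in>lists_n W t. \<Sum>xt\<in>W. \<Sum>xp\<in>(if t = 1 then {None} else Some ` W).
        let m = Prob n (\<lambda>(xs, ys). xs ! (t - 1) = xt \<and> prev (take t xs) = xp \<and> take t ys = yt);
            cond = Prob n (\<lambda>(xs, ys). take t ys = yt) / Prob n (\<lambda>(xs, ys). take (t - 1) ys = butlast yt)
        in if m > 0 then m * ln (qs t xt xp (butlast yt) (last yt) / cond) else 0)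
      = (\<Sum>z\<in>T. if Prob n (\<lambda>\<omega>. G \<omega> = z) > 0 then Prob n (\<lambda>\<omega>. G \<omega> = z) * L z else 0)"
    unfolding T_def sum.cartesian_product' Let_def L_def by (simp only: Prob_G prod.case)
  also have "\<dots> = (\<Sum>\<omega>\<in>Omega W n. J n \<omega> * L (G \<omega>))"
  proof (rule sum_if_Pr_pos_fibres[OF finite_Omega joint_nonneg])
    show "finite T"
      unfolding T_def using finite_lists_n finite_W by simp
    show "G ` Omega W n \<subseteq> T"
      unfolding G_def T_def using prev_take_mem[OF t] Omega_take[of t n] Omega_nth[of "t - 1" n] t
      by (force simp: Omega_def)
  qed
  also have "\<dots> = (\<Sum>\<omega>\<in>Omega W n. J n \<omega> * cmi_density (Omega W n) (J n) (state_at t) (release_at t) (releases_before t) \<omega>)"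
  proof (rule sum.cong[OF refl])
    fix \<omega>
    assume \<omega>: "\<omega> \<in> Omega W n"
    then show "J n \<omega> * L (G \<omega>)
      = J n \<omega> * cmi_density (Omega W n) (J n) (state_at t) (release_at t) (releases_before t) \<omega>"
      using joint_nonneg[OF \<omega>] cmi_density_state_eq_ln_ratio[OF t]
      by (cases \<omega>, cases "J n \<omega> > 0") (auto simp: L_def G_def)
  qed
  also have "\<dots> = cmi (Omega W n) (J n) (state_at t) (release_at t) (releases_before t)"
    by (rule cmi_eq_sum_density[of "Omega W n" "J n", OF finite_Omega joint_nonneg, symmetric])
  finally show ?thesis ..
qed

lemma mi_eq_sum_explicit:
  "mi (Omega W n) (J n) (\<lambda>(xs, ys). xs) (\<lambda>(xs, ys). ys)
    = (\<Sum>t = 1..n. \<Sum>yt\<in>lists_n W t. \<Sum>xt\<in>W. \<Sum>xp\<in>(if t = 1 then {None} else Some ` W).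
        let m = Prob n (\<lambda>(xs, ys). xs ! (t - 1) = xt \<and> prev (take t xs) = xp \<and> take t ys = yt);
            cond = Prob n (\<lambda>(xs, ys). take t ys = yt) / Prob n (\<lambda>(xs, ys). take (t - 1) ys = butlast yt)
        in if m > 0 then m * ln (qs t xt xp (butlast yt) (last yt) / cond) else 0)"
  unfolding mi_eq_sum_cmi_state by (rule sum.cong[OF refl]) (rule cmi_state_eq_sum)

end

theorem theorem1:
  fixes W :: "'a set" and p1 :: "'a \<Rightarrow> real" and Q :: "'a \<Rightarrow> 'a \<Rightarrow> real"
    and d :: "'a \<Rightarrow> 'a \<Rightarrow> real" and Dbar :: real
  assumes "finite W"
    and "markov_chain W p1 Q"
  shows "((INF q\<in>{q \<in> QH W. feasible W p1 Q d Dbar q}. objective W p1 Q q)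
           = (INF q\<in>{q \<in> QS W. feasible W p1 Q d Dbar q}. objective W p1 Q q))
         \<and> (\<forall>qs :: nat \<Rightarrow> 'a \<Rightarrow> 'a option \<Rightarrow> 'a list \<Rightarrow> 'a \<Rightarrow> real.
          (\<lambda>t xs ys y. qs t (last xs) (prev xs) ys y) \<in> QH W \<longrightarrow> (\<forall>n::nat.
          let q = (\<lambda>t xs ys y. qs t (last xs) (prev xs) ys y);
              S = Omega W n; pm = joint p1 Q q n
          in mi S pm (\<lambda>(xs, ys). xs) (\<lambda>(xs, ys). ys)
               = (\<Sum>t = 1..n. cmi S pm (\<lambda>(xs, ys). (xs ! (t - 1), prev (take t xs)))
                                  (\<lambda>(xs, ys). ys ! (t - 1)) (\<lambda>(xs, ys). take (t - 1) ys))
           \<and> mi S pm (\<lambda>(xs, ys). xs) (\<lambda>(xs, ys). ys)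
               = (\<Sum>t = 1..n. \<Sum>yt\<in>lists_n W t. \<Sum>xt\<in>W.
                    \<Sum>xp\<in>(if t = 1 then {None} else Some ` W).
                      let m = Pr S pm (\<lambda>(xs, ys). xs ! (t - 1) = xt \<and> prev (take t xs) = xp
                                                  \<and> take t ys = yt);
                          cond = Pr S pm (\<lambda>(xs, ys). take t ys = yt)
                                 / Pr S pm (\<lambda>(xs, ys). take (t - 1) ys = butlast yt)
                      in if m > 0 then m * ln (qs t xt xp (butlast yt) (last yt) / cond) else 0)))"
proof -
  have policy: "simplified_policy W p1 Q qs" if "(\<lambda>t xs ys y. qs t (last xs) (prev xs) ys y) \<in> QH W" for qs
    using assms that by unfold_locales
  show ?thesis
    unfolding Let_def
    by (intro conjI allI impI INF_QH_eq_INF_QS[OF assms] policy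
        simplified_policy.mi_eq_sum_cmi_state simplified_policy.mi_eq_sum_explicit[unfolded Let_def])
qed

end
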